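(* Let $\Pi\subset\mathbb R^d$ be a $d$-dimensional convex polytope that is a semisimplex, i.e. $\Pi$ is affinely isomorphic (equivalently, isomorphic as a barycentric algebra) to a direct product $\Delta_1\times\dots\times\Delta_k$ of simplices. Let $V$ be the vertex set of $\Pi$. Then for every point $\mathbf x\in\Pi$ and every vertex $\mathbf v\in V$, the Wachspress coordinate of $\mathbf x$ with respect to $\mathbf v$ equals the Gibbs coordinate of $\mathbf x$ with respect to $\mathbf v$.
   Context: A $d$-dimensional polytope is simple if each vertex is incident to exactly $d$ edges (a direct product of simplices is simple). Wachspress coordinates on a simple $d$-polytope $\Pi$ with vertices $\mathbf v_1,\dots,\mathbf v_n$: for an interior point $\mathbf x$ and a vertex $\mathbf v_i$, let $\mathbf n_{i_1},\dots,\mathbf n_{i_d}$ be the outward unit normals of the $d$ facets incident with $\mathbf v_i$, ordered according to the orientation of $\Pi$ (so that the determinant below is positive), and set $$w_i(\mathbf x)=\frac{d!\,\det[\mathbf n_{i_1},\dots,\mathbf n_{i_d}]}{\langle \mathbf v_i-\mathbf x,\mathbf n_{i_1}\rangle\cdots\langle \mathbf v_i-\mathbf x,\mathbf n_{i_d}\rangle}.$$ The Wachspress coordinates of $\mathbf x$ are $w(\mathbf x,\mathbf v_i)=w_i(\mathbf x)/\sum_{j=1}^n w_j(\mathbf x)$; they are extended to the boundary of $\Pi$ by continuity. Gibbs coordinates: for $\mathbf x\in\Pi$, among all probability distributions $(p_{\mathbf v})_{\mathbf v\in V}$ on $V$ with $\sum_{\mathbf v\in V}p_{\mathbf v}\mathbf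 v=\mathbf x$, there is a unique one maximizing the entropy $-\sum_{\mathbf v}p_{\mathbf v}\log p_{\mathbf v}$ (with $0\log 0=0$); its values are the Gibbs coordinates of $\mathbf x$ with respect to the vertices $\mathbf v\in V$ (taking the inclusion of the vertex set into $\Pi$ as the valuation function). *)

theory Defs
  imports "HOL-Analysis.Analysis"
begin

text \<open>The direct product of standard simplices Delta_{n 0} x ... x Delta_{n (k-1)}:
  a point is a family p i j (i < k, j \<le> n i) with each row p i a probability vector;
  entries outside the index range are zero.\<close>
definition prod_simplex :: "nat \<Rightarrow> (nat \<Rightarrow> nat) \<Rightarrow> (nat \<Rightarrow> nat \<Rightarrow> real) set" where
  "prod_simplex k n = {p. (\<forall>i j. (k \<le> i \<or> n i < j) \<longrightarrow> p i j = 0) \<and>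
      (\<forall>i<k. (\<forall>j. 0 \<le> p i j) \<and> (\<Sum>j\<le>n i. p i j) = 1)}"

text \<open>The general affine map from the product of simplices into a real vector space
  (every affine map on the product has this form).\<close>
definition prod_simplex_map ::
  "nat \<Rightarrow> (nat \<Rightarrow> nat) \<Rightarrow> (nat \<Rightarrow> nat \<Rightarrow> 'a::real_vector) \<Rightarrow> (nat \<Rightarrow> nat \<Rightarrow> real) \<Rightarrow> 'a" where
  "prod_simplex_map k n b p = (\<Sum>i<k. \<Sum>j\<le>n i. p i j *\<^sub>R b i j)"

definition semisimplex :: "'a::real_vector set \<Rightarrow> bool" where
  "semisimplex P \<longleftrightarrow> (\<exists>k n b. inj_on (prod_simplex_map k n b) (prod_simplex k n) \<and>
       prod_simplex_map k n b ` prod_simplex k n = P)"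

definition vertices :: "'a::real_vector set \<Rightarrow> 'a set" where
  "vertices P = {v. v extreme_point_of P}"

text \<open>Outward unit normal of a facet F of a full-dimensional polytope P.\<close>
definition outward_normal :: "'a::euclidean_space set \<Rightarrow> 'a set \<Rightarrow> 'a" where
  "outward_normal P F = (THE u. norm u = 1 \<and>
      (\<exists>h. P \<subseteq> {y. u \<bullet> y \<le> h} \<and> F \<subseteq> {y. u \<bullet> y = h}))"

definition facets_at :: "'a::euclidean_space set \<Rightarrow> 'a \<Rightarrow> 'a set set" where
  "facets_at P v = {F. F facet_of P \<and> v \<in> F}"

text \<open>det[n_{i_1},...,n_{i_d}] for the orientation-respecting ordering, i.e. the absolute value
  of the determinant of the matrix whose rows are the outward unit normals of the d facets
  at v (in any order).\<close>
definition normal_det :: "(real^'n) set \<Rightarrow> real^'n \<Rightarrow> real" where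
  "normal_det P v = (let g = (SOME g::'n \<Rightarrow> (real^'n) set. bij_betw g UNIV (facets_at P v))
     in \<bar>det (\<chi> i. outward_normal P (g i))\<bar>)"

definition wachspress_weight :: "(real^'n) set \<Rightarrow> real^'n \<Rightarrow> real^'n \<Rightarrow> real" where
  "wachspress_weight P v x = fact CARD('n) * normal_det P v /
      (\<Prod>F\<in>facets_at P v. (v - x) \<bullet> outward_normal P F)"

definition wachspress_interior :: "(real^'n) set \<Rightarrow> real^'n \<Rightarrow> real^'n \<Rightarrow> real" where
  "wachspress_interior P x v =
     wachspress_weight P v x / (\<Sum>u\<in>vertices P. wachspress_weight P u x)"

definition wachspress :: "(real^'n) set \<Rightarrow> real^'n \<Rightarrow> real^'n \<Rightarrow> real" where
  "wachspress P x v = (if x \<in> interior P then wachspress_interior P x v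
     else Lim (at x within interior P) (\<lambda>y. wachspress_interior P y v))"

definition entropy :: "'a set \<Rightarrow> ('a \<Rightarrow> real) \<Rightarrow> real" where
  "entropy V p = - (\<Sum>v\<in>V. if p v = 0 then 0 else p v * ln (p v))"

definition barycentric_dists :: "'a::real_vector set \<Rightarrow> 'a \<Rightarrow> ('a \<Rightarrow> real) set" where
  "barycentric_dists V x = {p. (\<forall>v. v \<notin> V \<longrightarrow> p v = 0) \<and> (\<forall>v\<in>V. 0 \<le> p v) \<and>
      (\<Sum>v\<in>V. p v) = 1 \<and> (\<Sum>v\<in>V. p v *\<^sub>R v) = x}"

definition gibbs :: "'a::real_vector set \<Rightarrow> 'a \<Rightarrow> 'a \<Rightarrow> real" where
  "gibbs V x = (THE p. p \<in> barycentric_dists V x \<and>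
      (\<forall>q\<in>barycentric_dists V x. entropy V q \<le> entropy V p))"

end

(*
  Through the affine isomorphism with a product of simplices Delta_(n 0) x ... x Delta_(n (k-1)),
  every point x gets product barycentric coordinates lambda_ij(x), affine in x and summing to 1
  in each factor. The polytope is {lambda >= 0}, its vertices v_J correspond to the choices J of
  one index per factor, and its facets are the hyperplanes lambda_ij = 0 with n i >= 1; the
  facets through v_J are those with j <> J i.

  Wachspress: (v_J - x) . n_(ij) = lambda_ij(x) / |grad lambda_ij|, so the Wachspress weight of
  v_J is d! D / prod_(j <> J i) lambda_ij(x), where D = |det (grad lambda_F)_(F through v_J)|
  does not depend on J (exchanging a facet is a row operation). Multiplying all weights by
  prod_(i,j) lambda_ij(x) shows that the Wachspress coordinate of v_J is the product
  coordinate prod_i lambda_(i,J i)(x); on the boundary this follows by continuity.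

  Gibbs: every distribution on the vertices with barycenter x has the marginals lambda_i(x), so
  its cross entropy against the product distribution depends only on x, and Gibbs' inequality
  shows that the product distribution is the unique maximizer of the entropy.
*)

theory Submission
  imports Defs
begin

lemma linear_real_eq_inner:
  fixes g :: "real^'d \<Rightarrow> real"
  assumes "linear g"
  shows "g x = (\<chi> r. g (axis r 1)) \<bullet> x"
proof -
  have "g x = g (\<Sum>r\<in>UNIV. x$r *\<^sub>R axis r 1)"
    using basis_expansion[of x] by (simp add: scalar_mult_eq_scaleR)
  also have "\<dots> = (\<Sum>r\<in>UNIV. x$r * g (axis r 1))"
    using assms by (simp add: linear_sum linear_scale)
  also have "\<dots> = (\<chi> r. g (axis r 1)) \<bullet> x"
    by (simp add: inner_vec_def mult.commute)
  finally show ?thesis .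
qed

lemma supporting_unit_normal_unique:
  fixes a u z :: "'a::euclidean_space"
  assumes "a \<noteq> 0" "e > 0"
    and near: "ball z e \<inter> {y. a \<bullet> y \<le> a \<bullet> z} \<subseteq> P"
    and supp: "P \<subseteq> {y. u \<bullet> y \<le> u \<bullet> z}" and "norm u = 1"
  shows "u = (1 / norm a) *\<^sub>R a"
proof -
  have cone: "u \<bullet> w \<le> 0" if "a \<bullet> w \<le> 0" for w
  proof -
    define t where "t = e / (2 * (norm w + 1))"
    have t: "t > 0" using \<open>e > 0\<close> by (simp add: t_def add_nonneg_pos)
    have "t * norm w = e * (norm w / (2 * (norm w + 1)))" by (simp add: t_def)
    also have "\<dots> < e * 1"
    proof (rule mult_strict_left_mono)
      have half: "r / (2 * (r + 1)) < 1" if "0 \<le> r" for r :: real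
        using that by (simp add: divide_less_eq)
      show "norm w / (2 * (norm w + 1)) < 1" by (rule half) simp
    qed (use \<open>e > 0\<close> in simp)
    finally have "z + t *\<^sub>R w \<in> ball z e" using t by (simp add: dist_norm)
    moreover have "a \<bullet> (z + t *\<^sub>R w) \<le> a \<bullet> z"
      using t that by (simp add: inner_add_right mult_nonneg_nonpos)
    ultimately have "u \<bullet> (z + t *\<^sub>R w) \<le> u \<bullet> z" using near supp by blast
    then show ?thesis using t by (simp add: inner_add_right mult_le_0_iff)
  qed
  define s where "s = (u \<bullet> a) / (a \<bullet> a)"
  define w where "w = u - s *\<^sub>R a"
  have "a \<bullet> w = 0" using \<open>a \<noteq> 0\<close> by (simp add: w_def s_def inner_diff_right inner_commute)
  then have "u \<bullet> w = 0" using cone[of w] cone[of "- w"] by simp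
  then have "w \<bullet> w = 0" using \<open>a \<bullet> w = 0\<close> by (simp add: w_def inner_diff_left inner_commute)
  then have u: "u = s *\<^sub>R a" by (simp add: w_def)
  have "s \<ge> 0" using cone[of "- a"] \<open>a \<noteq> 0\<close> by (simp add: s_def)
  moreover have "\<bar>s\<bar> * norm a = 1" using \<open>norm u = 1\<close> u by simp
  ultimately have "s = 1 / norm a" using \<open>a \<noteq> 0\<close> by (simp add: field_simps)
  then show ?thesis using u by simp
qed

lemma abs_det_rows_bij_eq:
  fixes g :: "'b \<Rightarrow> real^'n"
  assumes h1: "bij_betw h1 (UNIV::'n set) A" and h2: "bij_betw h2 (UNIV::'n set) A"
  shows "\<bar>det (\<chi> r. g (h1 r))\<bar> = \<bar>det (\<chi> r. g (h2 r))\<bar>"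
proof -
  define p where "p = (\<lambda>r. inv_into UNIV h1 (h2 r))"
  have "bij_betw p UNIV UNIV"
    unfolding p_def using bij_betw_trans[OF h2 bij_betw_inv_into[OF h1]] by (simp add: comp_def)
  then have p: "p permutes (UNIV::'n set)" by (rule bij_imp_permutes) simp
  have "h1 (p r) = h2 r" for r
    using h1 h2 unfolding p_def bij_betw_def by (metis f_inv_into_f rangeI)
  then have "det (\<chi> r. g (h2 r)) = of_int (sign p) * det (\<chi> r. g (h1 r))"
    using det_permute_rows[OF p, of "\<chi> r. g (h1 r)"] by simp
  then show ?thesis by (simp add: sign_def abs_mult)
qed

lemma abs_det_negate_row_add_span:
  fixes A :: "real^'n^'n"
  assumes "x \<in> span {row j A |j. j \<noteq> i}"
  shows "\<bar>det (\<chi> r. if r = i then x - row i A else row r A)\<bar> = \<bar>det A\<bar>"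
proof -
  define B where "B = (\<chi> r. if r = i then - row i A else row r A)"
  have "{row j B |j. j \<noteq> i} = {row j A |j. j \<noteq> i}" by (auto simp: B_def row_def)
  then have "det (\<chi> r. if r = i then row i B + x else row r B) = det B"
    using assms by (intro det_row_span) (simp add: span_vec_eq)
  moreover have "(\<chi> r. if r = i then row i B + x else row r B) =
      (\<chi> r. if r = i then x - row i A else row r A)"
    by (simp add: B_def row_def vec_eq_iff)
  moreover have "det B = - det A"
  proof -
    have "B = (\<chi> r. if r = i then (-1) *s row r A else row r A)"
      by (simp add: B_def vec_eq_iff)
    then show ?thesis
      using det_row_mul[where k=i and c="-1" and a="\<lambda>r. row r A" and b="\<lambda>r. row r A"]
      by (simp add: row_def)
  qed
  ultimately show ?thesis by simp
qed

lemma mult_ln_ratio_le: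
  fixes p q :: real
  assumes "0 \<le> p" "0 \<le> q" "0 < p \<Longrightarrow> 0 < q"
  shows "p * (ln q - ln p) \<le> q - p"
    and "p * (ln q - ln p) = q - p \<Longrightarrow> p = q"
proof -
  have "p * (ln q - ln p) \<le> q - p \<and> (p * (ln q - ln p) = q - p \<longrightarrow> p = q)"
  proof (cases "p = 0")
    case False
    then have "0 < p" "0 < q" using assms by auto
    then have eq: "p * (ln q - ln p) = p * ln (q / p)" "q - p = p * (q / p - 1)"
      by (simp_all add: ln_div field_simps)
    have "ln (q / p) \<le> q / p - 1" using \<open>0 < p\<close> \<open>0 < q\<close> by (intro ln_le_minus_one) simp
    moreover have "ln (q / p) = q / p - 1 \<Longrightarrow> q / p = 1"
      using \<open>0 < p\<close> \<open>0 < q\<close> by (intro ln_eq_minus_one) simp_all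
    ultimately show ?thesis using \<open>0 < p\<close> unfolding eq by (auto simp: mult_le_cancel_left)
  qed (use assms in simp)
  then show "p * (ln q - ln p) \<le> q - p" and "p * (ln q - ln p) = q - p \<Longrightarrow> p = q"
    by blast+
qed

lemma gibbs_inequality:
  fixes p q :: "'a \<Rightarrow> real"
  assumes "finite T" and p: "\<And>t. t \<in> T \<Longrightarrow> 0 \<le> p t" and q: "\<And>t. t \<in> T \<Longrightarrow> 0 \<le> q t"
    and "sum p T = 1" "sum q T = 1" and pq: "\<And>t. t \<in> T \<Longrightarrow> 0 < p t \<Longrightarrow> 0 < q t"
  shows "(\<Sum>t\<in>T. p t * ln (q t)) \<le> (\<Sum>t\<in>T. p t * ln (p t))"
    and "(\<Sum>t\<in>T. p t * ln (q t)) = (\<Sum>t\<in>T. p t * ln (p t)) \<Longrightarrow> \<forall>t\<in>T. p t = q t"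
proof -
  define d where "d t = (q t - p t) - p t * (ln (q t) - ln (p t))" for t
  have d: "0 \<le> d t" "d t = 0 \<Longrightarrow> p t = q t" if "t \<in> T" for t
    using mult_ln_ratio_le[OF p q pq] that unfolding d_def by auto
  have sum_d: "sum d T = (\<Sum>t\<in>T. p t * ln (p t)) - (\<Sum>t\<in>T. p t * ln (q t))"
    using assms by (simp add: d_def sum_subtractf right_diff_distrib)
  show "(\<Sum>t\<in>T. p t * ln (q t)) \<le> (\<Sum>t\<in>T. p t * ln (p t))"
    using sum_nonneg[of T d] d(1) sum_d by simp
  assume "(\<Sum>t\<in>T. p t * ln (q t)) = (\<Sum>t\<in>T. p t * ln (p t))"
  then have "sum d T = 0" using sum_d by simp
  then show "\<forall>t\<in>T. p t = q t" using sum_nonneg_eq_0_iff[OF \<open>finite T\<close>] d by blast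
qed

lemma entropy_eq: "entropy V p = - (\<Sum>v\<in>V. p v * ln (p v))"
proof -
  have "(if t = 0 then 0 else t * ln t) = t * ln t" for t :: real by simp
  then show ?thesis unfolding entropy_def by presburger
qed

lemma gibbs_eqI:
  assumes "r \<in> barycentric_dists V x"
    and "\<And>q. q \<in> barycentric_dists V x \<Longrightarrow> entropy V q \<le> entropy V r"
    and "\<And>q. q \<in> barycentric_dists V x \<Longrightarrow> entropy V q = entropy V r \<Longrightarrow> q = r"
  shows "gibbs V x = r"
  unfolding gibbs_def
proof (rule the_equality)
  fix p assume "p \<in> barycentric_dists V x \<and> (\<forall>q\<in>barycentric_dists V x. entropy V q \<le> entropy V p)"
  then show "p = r" using assms by (meson order.antisym)
qed (use assms in blast)

lemma prod_simplex_map_add: "prod_simplex_map k n b (\<lambda>i j. p i j + q i j) =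
    prod_simplex_map k n b p + prod_simplex_map k n b q"
  by (simp add: prod_simplex_map_def scaleR_add_left sum.distrib)

lemma prod_simplex_map_diff: "prod_simplex_map k n b (\<lambda>i j. p i j - q i j) =
    prod_simplex_map k n b p - prod_simplex_map k n b q"
  by (simp add: prod_simplex_map_def scaleR_diff_left sum_subtractf)

lemma prod_simplex_map_scale:
  "prod_simplex_map k n b (\<lambda>i j. t * p i j) = t *\<^sub>R prod_simplex_map k n b p"
  by (simp add: prod_simplex_map_def scaleR_sum_right)

lemma prod_simplex_map_zero: "prod_simplex_map k n b (\<lambda>i j. 0) = 0"
  by (simp add: prod_simplex_map_def)

lemma bij_betw_fun_upd_replace:
  assumes "bij_betw h D A" "r \<in> D" "a' \<notin> A"
  shows "bij_betw (h(r := a')) D (insert a' (A - {h r}))"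
proof (rule bij_betw_imageI)
  show "inj_on (h(r := a')) D"
    using assms by (intro inj_on_fun_updI) (auto simp: bij_betw_def)
  have "(h(r := a')) ` D = insert a' (h ` (D - {r}))"
    by (simp only: fun_upd_image if_P[OF assms(2)])
  also have "h ` (D - {r}) = A - {h r}"
    using assms(1,2) unfolding bij_betw_def inj_on_def by blast
  finally show "(h(r := a')) ` D = insert a' (A - {h r})" .
qed

locale full_dim_semisimplex =
  fixes k :: nat and n :: "nat \<Rightarrow> nat" and b :: "nat \<Rightarrow> nat \<Rightarrow> real^'d"
  assumes inj: "inj_on (prod_simplex_map k n b) (prod_simplex k n)"
    and aff_dim_eq: "aff_dim (prod_simplex_map k n b ` prod_simplex k n) = int CARD('d)"
begin

abbreviation "\<Phi> \<equiv> prod_simplex_map k n b"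
abbreviation "\<Delta> \<equiv> prod_simplex k n"
abbreviation "P \<equiv> \<Phi> ` \<Delta>"

section \<open>Affine coordinates on a full-dimensional semisimplex\<close>

definition plane :: "(nat \<Rightarrow> nat \<Rightarrow> real) set" where
  "plane = {p. (\<forall>i j. (k \<le> i \<or> n i < j) \<longrightarrow> p i j = 0) \<and> (\<forall>i<k. (\<Sum>j\<le>n i. p i j) = 1)}"

definition dirs :: "(nat \<Rightarrow> nat \<Rightarrow> real) set" where
  "dirs = {w. (\<forall>i j. (k \<le> i \<or> n i < j) \<longrightarrow> w i j = 0) \<and> (\<forall>i<k. (\<Sum>j\<le>n i. w i j) = 0)}"

definition centre :: "nat \<Rightarrow> nat \<Rightarrow> real" where
  "centre i j = (if i < k \<and> j \<le> n i then 1 / (real (n i) + 1) else 0)"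

lemma mem_prod_simplex_iff: "p \<in> \<Delta> \<longleftrightarrow> p \<in> plane \<and> (\<forall>i j. 0 \<le> p i j)"
proof -
  have "0 \<le> p i j"
    if "\<forall>i j. (k \<le> i \<or> n i < j) \<longrightarrow> p i j = 0" "\<forall>i<k. \<forall>j. 0 \<le> p i j" for i j
    using that by (cases "i < k") auto
  then show ?thesis unfolding prod_simplex_def plane_def by auto
qed

lemma centre_in_plane: "centre \<in> plane"
  by (simp add: plane_def centre_def)

lemma centre_pos: "i < k \<Longrightarrow> j \<le> n i \<Longrightarrow> 0 < centre i j"
  by (simp add: centre_def)

lemma centre_in_prod_simplex: "centre \<in> \<Delta>"
  using centre_in_plane by (simp add: mem_prod_simplex_iff centre_def)

lemma plane_diff_in_dirs: "p \<in> plane \<Longrightarrow> q \<in> plane \<Longrightarrow> (\<lambda>i j. p i j - q i j) \<in> dirs"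
  by (simp add: plane_def dirs_def sum_subtractf)

lemma plane_add_dir: "p \<in> plane \<Longrightarrow> w \<in> dirs \<Longrightarrow> (\<lambda>i j. p i j + w i j) \<in> plane"
  by (simp add: plane_def dirs_def sum.distrib)

lemma dirs_zero: "(\<lambda>i j. 0) \<in> dirs"
  by (simp add: dirs_def)

lemma dirs_add: "w \<in> dirs \<Longrightarrow> v \<in> dirs \<Longrightarrow> (\<lambda>i j. w i j + v i j) \<in> dirs"
  by (simp add: dirs_def sum.distrib)

lemma dirs_scale: "w \<in> dirs \<Longrightarrow> (\<lambda>i j. t * w i j) \<in> dirs"
  by (simp add: dirs_def flip: sum_distrib_left)

lemma dirs_diff: "w \<in> dirs \<Longrightarrow> v \<in> dirs \<Longrightarrow> (\<lambda>i j. w i j - v i j) \<in> dirs"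
  by (simp add: dirs_def sum_subtractf)

lemma centre_add_small_dir_in_prod_simplex:
  assumes w: "w \<in> dirs"
  obtains t where "t > 0" "(\<lambda>i j. centre i j + t * w i j) \<in> \<Delta>"
proof -
  define m where "m = 1 + (\<Sum>i<k. \<Sum>j\<le>n i. \<bar>w i j\<bar>)"
  define N where "N = (\<Sum>i<k. n i)"
  define t where "t = 1 / (m * (real N + 1))"
  have m: "m \<ge> 1" unfolding m_def by (simp add: sum_nonneg)
  then have t: "t > 0" by (simp add: t_def)
  have bound: "t * \<bar>w i j\<bar> \<le> centre i j" if "i < k" "j \<le> n i" for i j
  proof -
    have "\<bar>w i j\<bar> \<le> (\<Sum>j\<le>n i. \<bar>w i j\<bar>)"
      using that by (intro member_le_sum) auto
    also have "\<dots> \<le> (\<Sum>i<k. \<Sum>j\<le>n i. \<bar>w i j\<bar>)"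
      using that by (intro member_le_sum[where f="\<lambda>i. \<Sum>j\<le>n i. \<bar>w i j\<bar>"]) (auto intro: sum_nonneg)
    finally have "t * \<bar>w i j\<bar> \<le> t * m" using t by (simp add: m_def)
    also have "\<dots> = 1 / (real N + 1)" using m by (simp add: t_def)
    also have "\<dots> \<le> 1 / (real (n i) + 1)"
    proof -
      have "n i \<le> N" unfolding N_def using that by (intro member_le_sum) auto
      then show ?thesis by (simp add: frac_le)
    qed
    finally show ?thesis using that by (simp add: centre_def)
  qed
  have lower: "- (t * \<bar>w i j\<bar>) \<le> t * w i j" for i j
    using mult_left_mono[OF abs_ge_minus_self[of "w i j"], of t] t by simp
  have "0 \<le> centre i j + t * w i j" for i j
  proof (cases "i < k \<and> j \<le> n i")
    case True
    then have "t * \<bar>w i j\<bar> \<le> centre i j" using bound by blast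
    then show ?thesis using lower[of i j] by linarith
  next
    case False
    then show ?thesis using w by (auto simp: dirs_def centre_def)
  qed
  then show ?thesis
    using that t plane_add_dir[OF centre_in_plane dirs_scale[OF w, of t]]
    by (simp add: mem_prod_simplex_iff)
qed

lemma dirs_inj:
  assumes w: "w \<in> dirs" and "\<Phi> w = 0"
  shows "w = (\<lambda>i j. 0)"
proof -
  obtain t where t: "t > 0" and in_simplex: "(\<lambda>i j. centre i j + t * w i j) \<in> \<Delta>"
    using centre_add_small_dir_in_prod_simplex[OF w] .
  have "\<Phi> (\<lambda>i j. centre i j + t * w i j) = \<Phi> centre"
    using \<open>\<Phi> w = 0\<close> by (simp add: prod_simplex_map_add prod_simplex_map_scale)
  then have "(\<lambda>i j. centre i j + t * w i j) = centre"
    using inj in_simplex centre_in_prod_simplex by (meson inj_onD)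
  then show ?thesis using t by (simp add: fun_eq_iff)
qed

lemma dirs_eq_of_map_eq: "w \<in> dirs \<Longrightarrow> v \<in> dirs \<Longrightarrow> \<Phi> w = \<Phi> v \<Longrightarrow> w = v"
  using dirs_inj[OF dirs_diff, of w v] by (simp add: prod_simplex_map_diff fun_eq_iff)

lemma dirs_surj: "\<exists>w\<in>dirs. \<Phi> w = x"
proof -
  define U where "U = \<Phi> ` dirs"
  have "subspace U" unfolding subspace_def U_def
  proof (intro conjI ballI allI)
    have "\<Phi> (\<lambda>i j. 0) \<in> \<Phi> ` dirs" using dirs_zero by (rule imageI)
    then show "0 \<in> \<Phi> ` dirs" by (simp only: prod_simplex_map_zero)
  next
    fix x y assume "x \<in> \<Phi> ` dirs" "y \<in> \<Phi> ` dirs"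
    then obtain w v where "w \<in> dirs" "v \<in> dirs" "x = \<Phi> w" "y = \<Phi> v" by blast
    then show "x + y \<in> \<Phi> ` dirs"
      by (intro rev_image_eqI[of "\<lambda>i j. w i j + v i j"])
        (simp_all add: dirs_add prod_simplex_map_add)
  next
    fix t :: real and x assume "x \<in> \<Phi> ` dirs"
    then obtain w where "w \<in> dirs" "x = \<Phi> w" by blast
    then show "t *\<^sub>R x \<in> \<Phi> ` dirs"
      by (intro rev_image_eqI[of "\<lambda>i j. t * w i j"])
        (simp_all add: dirs_scale prod_simplex_map_scale)
  qed
  have "(+) (- \<Phi> centre) ` P \<subseteq> U"
  proof
    fix y assume "y \<in> (+) (- \<Phi> centre) ` P"
    then obtain p where p: "p \<in> \<Delta>" "y = - \<Phi> centre + \<Phi> p" by blast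
    then have "y = \<Phi> (\<lambda>i j. p i j - centre i j)" by (simp add: prod_simplex_map_diff)
    moreover have "(\<lambda>i j. p i j - centre i j) \<in> dirs"
      using p(1) centre_in_plane plane_diff_in_dirs by (simp add: mem_prod_simplex_iff)
    ultimately show "y \<in> U" unfolding U_def by blast
  qed
  moreover have "aff_dim P = int (dim ((+) (- \<Phi> centre) ` P))"
    using centre_in_prod_simplex by (intro aff_dim_eq_dim) (simp add: hull_inc)
  ultimately have "CARD('d) \<le> dim U" using aff_dim_eq dim_subset by (metis of_nat_le_iff)
  then have "dim U = DIM(real^'d)" using dim_subset_UNIV[of U] by simp
  then have "span U = UNIV" using dim_eq_full by blast
  then have "U = UNIV" using \<open>subspace U\<close> span_eq_iff by blast
  then show ?thesis unfolding U_def by (metis UNIV_I imageE)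
qed

definition dir_coord :: "real^'d \<Rightarrow> nat \<Rightarrow> nat \<Rightarrow> real" where
  "dir_coord x = (THE w. w \<in> dirs \<and> \<Phi> w = x)"

lemma dir_coord: "dir_coord x \<in> dirs" "\<Phi> (dir_coord x) = x"
proof -
  have "\<exists>!w. w \<in> dirs \<and> \<Phi> w = x" using dirs_surj dirs_eq_of_map_eq by blast
  then have "dir_coord x \<in> dirs \<and> \<Phi> (dir_coord x) = x" unfolding dir_coord_def by (rule theI')
  then show "dir_coord x \<in> dirs" "\<Phi> (dir_coord x) = x" by blast+
qed

lemma dir_coord_map: "w \<in> dirs \<Longrightarrow> dir_coord (\<Phi> w) = w"
  using dirs_eq_of_map_eq dir_coord by blast

lemma linear_dir_coord: "linear (\<lambda>x. dir_coord x i j)"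
proof (rule linearI)
  fix x y :: "real^'d" and t :: real
  have "dir_coord (x + y) = dir_coord (\<Phi> (\<lambda>i j. dir_coord x i j + dir_coord y i j))"
    by (simp add: prod_simplex_map_add dir_coord)
  also have "\<dots> = (\<lambda>i j. dir_coord x i j + dir_coord y i j)"
    by (intro dir_coord_map dirs_add dir_coord)
  finally show "dir_coord (x + y) i j = dir_coord x i j + dir_coord y i j" by simp
  have "dir_coord (t *\<^sub>R x) = dir_coord (\<Phi> (\<lambda>i j. t * dir_coord x i j))"
    by (simp add: prod_simplex_map_scale dir_coord)
  also have "\<dots> = (\<lambda>i j. t * dir_coord x i j)"
    by (intro dir_coord_map dirs_scale dir_coord)
  finally show "dir_coord (t *\<^sub>R x) i j = t *\<^sub>R dir_coord x i j" by simp
qed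

definition grad :: "nat \<Rightarrow> nat \<Rightarrow> real^'d" where
  "grad i j = (\<chi> r. dir_coord (axis r 1) i j)"

lemma dir_coord_eq_inner: "dir_coord x i j = grad i j \<bullet> x"
  unfolding grad_def by (rule linear_real_eq_inner[OF linear_dir_coord])

lemma grad_inner_map: "w \<in> dirs \<Longrightarrow> grad i j \<bullet> \<Phi> w = w i j"
  by (simp add: dir_coord_eq_inner[symmetric] dir_coord_map)

lemma grad_row_sum: "(\<Sum>j\<le>n i. grad i j) = 0"
proof -
  have "(\<Sum>j\<le>n i. grad i j) \<bullet> x = 0" for x
    using dir_coord(1)[of x]
      by (cases "i < k") (auto simp: dirs_def inner_sum_left dir_coord_eq_inner)
  from this[of "\<Sum>j\<le>n i. grad i j"] show ?thesis by simp
qed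

text \<open>The inverse of \<Phi> on the affine hull of the product of simplices: bary x i j is
  the j-th barycentric coordinate of x in the i-th factor.\<close>
definition bary :: "real^'d \<Rightarrow> nat \<Rightarrow> nat \<Rightarrow> real" where
  "bary x = (\<lambda>i j. centre i j + dir_coord (x - \<Phi> centre) i j)"

lemma bary_in_plane: "bary x \<in> plane"
  unfolding bary_def by (intro plane_add_dir centre_in_plane dir_coord)

lemma map_bary: "\<Phi> (bary x) = x"
  unfolding bary_def by (simp add: prod_simplex_map_add dir_coord)

lemma bary_map: "p \<in> plane \<Longrightarrow> bary (\<Phi> p) = p"
  using dir_coord_map[OF plane_diff_in_dirs[OF _ centre_in_plane]]
  by (simp add: bary_def prod_simplex_map_diff[symmetric])

text \<open>Not a simp rule: it rewrites bary 0 i j to itself plus zero, forever.\<close>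
lemma bary_affine: "bary x i j = grad i j \<bullet> x + bary 0 i j"
  by (simp add: bary_def dir_coord_eq_inner inner_diff_right)

lemma bary_outside: "k \<le> i \<or> n i < j \<Longrightarrow> bary x i j = 0"
  using bary_in_plane[of x] unfolding plane_def by blast

lemma bary_row_sum: "i < k \<Longrightarrow> (\<Sum>j\<le>n i. bary x i j) = 1"
  using bary_in_plane by (simp add: plane_def)

lemma mem_P_iff: "x \<in> P \<longleftrightarrow> (\<forall>i<k. \<forall>j\<le>n i. 0 \<le> bary x i j)"
proof
  assume "x \<in> P"
  then obtain p where "p \<in> \<Delta>" "x = \<Phi> p" by blast
  then show "\<forall>i<k. \<forall>j\<le>n i. 0 \<le> bary x i j" by (simp add: mem_prod_simplex_iff bary_map)
next
  assume "\<forall>i<k. \<forall>j\<le>n i. 0 \<le> bary x i j"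
  then have "0 \<le> bary x i j" for i j using bary_outside[of i j x] by (cases "i < k \<and> j \<le> n i") auto
  then have "bary x \<in> \<Delta>" using bary_in_plane by (simp add: mem_prod_simplex_iff)
  then show "x \<in> P" by (metis image_eqI map_bary)
qed

lemma bary_in_prod_simplex: "x \<in> P \<Longrightarrow> bary x \<in> \<Delta>"
  by (auto simp: bary_map mem_prod_simplex_iff)

lemma bary_segment: "bary ((1 - u) *\<^sub>R y + u *\<^sub>R z) i j = (1 - u) * bary y i j + u * bary z i j"
  using bary_affine[of "(1 - u) *\<^sub>R y + u *\<^sub>R z" i j] bary_affine[of y i j] bary_affine[of z i j]
  by (simp add: inner_add_right algebra_simps)

lemma bary_convex_comb:
  assumes "sum u A = 1"
  shows "bary (\<Sum>a\<in>A. u a *\<^sub>R y a) i j = (\<Sum>a\<in>A. u a * bary (y a) i j)"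
proof -
  have "bary (\<Sum>a\<in>A. u a *\<^sub>R y a) i j = grad i j \<bullet> (\<Sum>a\<in>A. u a *\<^sub>R y a) + bary 0 i j"
    by (rule bary_affine)
  also have "\<dots> = (\<Sum>a\<in>A. u a * (grad i j \<bullet> y a)) + sum u A * bary 0 i j"
    using assms by (simp add: inner_sum_right)
  also have "\<dots> = (\<Sum>a\<in>A. u a * (grad i j \<bullet> y a + bary 0 i j))"
    by (simp add: sum_distrib_right distrib_left sum.distrib)
  also have "\<dots> = (\<Sum>a\<in>A. u a * bary (y a) i j)"
    by (simp only: bary_affine[symmetric])
  finally show ?thesis .
qed

section \<open>Vertices\<close>

definition labels :: "(nat \<Rightarrow> nat) set" where
  "labels = PiE {..<k} (\<lambda>i. {..n i})"

definition corner :: "(nat \<Rightarrow> nat) \<Rightarrow> nat \<Rightarrow> nat \<Rightarrow> real" where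
  "corner J = (\<lambda>i j. if i < k \<and> j = J i then 1 else 0)"

definition vertex :: "(nat \<Rightarrow> nat) \<Rightarrow> real^'d" where
  "vertex J = \<Phi> (corner J)"

lemma label_le: "J \<in> labels \<Longrightarrow> i < k \<Longrightarrow> J i \<le> n i"
  by (auto simp: labels_def PiE_def Pi_def)

lemma label_upd: "J \<in> labels \<Longrightarrow> i < k \<Longrightarrow> j \<le> n i \<Longrightarrow> J(i := j) \<in> labels"
  by (auto simp: labels_def PiE_def Pi_def extensional_def)

lemma finite_labels: "finite labels"
  unfolding labels_def by (intro finite_PiE) auto

lemma corner_in_prod_simplex:
  assumes "J \<in> labels" shows "corner J \<in> \<Delta>"
proof -
  have "(\<Sum>j\<le>n i. corner J i j) = 1" if "i < k" for i
    using that label_le[OF assms that] by (simp add: corner_def sum.delta')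
  moreover have "corner J i j = 0" if "k \<le> i \<or> n i < j" for i j
    using that label_le[OF assms, of i] by (auto simp: corner_def)
  ultimately show ?thesis by (auto simp: mem_prod_simplex_iff plane_def corner_def)
qed

lemma bary_vertex: "J \<in> labels \<Longrightarrow> bary (vertex J) = corner J"
  unfolding vertex_def using corner_in_prod_simplex bary_map mem_prod_simplex_iff by blast

lemma vertex_in_P: "J \<in> labels \<Longrightarrow> vertex J \<in> P"
  unfolding vertex_def using corner_in_prod_simplex by blast

lemma inj_on_vertex: "inj_on vertex labels"
proof (rule inj_onI)
  fix J J' assume J: "J \<in> labels" "J' \<in> labels" and "vertex J = vertex J'"
  then have eq: "corner J = corner J'" using bary_vertex by metis
  have "J i = J' i" if "i < k" for i
  proof -
    have "corner J' i (J i) = 1" using fun_cong[OF fun_cong[OF eq, of i], of "J i"] that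
      by (simp add: corner_def)
    then show ?thesis by (simp add: corner_def split: if_splits)
  qed
  then show "J = J'" using J unfolding labels_def by (intro PiE_ext) auto
qed

lemma eq_corner:
  assumes p: "p \<in> \<Delta>" and J: "J \<in> labels"
    and zero: "\<And>i j. i < k \<Longrightarrow> j \<le> n i \<Longrightarrow> j \<noteq> J i \<Longrightarrow> p i j = 0"
  shows "p = corner J"
proof (intro ext)
  fix i j
  show "p i j = corner J i j"
  proof (cases "i < k \<and> j \<le> n i")
    case True
    have "1 = (\<Sum>j\<le>n i. p i j)" using p True by (simp add: mem_prod_simplex_iff plane_def)
    also have "\<dots> = (\<Sum>j'\<le>n i. if j' = J i then p i j' else 0)"
      using zero True by (intro sum.cong) auto
    also have "\<dots> = p i (J i)" using label_le[OF J] True by (simp add: sum.delta')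
    finally show ?thesis using zero True by (auto simp: corner_def)
  next
    case False
    then show ?thesis using p label_le[OF J, of i]
      by (auto simp: mem_prod_simplex_iff plane_def corner_def)
  qed
qed

lemma extreme_point_vertex:
  assumes J: "J \<in> labels" shows "vertex J extreme_point_of P"
  unfolding extreme_point_of_def
proof (intro conjI ballI notI)
  show "vertex J \<in> P" by (rule vertex_in_P[OF J])
  fix y z assume y: "y \<in> P" and z: "z \<in> P" and "vertex J \<in> open_segment y z"
  then obtain u where "y \<noteq> z" "0 < u" "u < 1" and eq: "vertex J = (1 - u) *\<^sub>R y + u *\<^sub>R z"
    by (auto simp: in_segment)
  have comb: "corner J i j = (1 - u) * bary y i j + u * bary z i j" for i j
    using bary_segment[of u y z i j] bary_vertex[OF J] eq by simp
  have "bary y = corner J" "bary z = corner J"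
  proof -
    have "bary y i j = 0 \<and> bary z i j = 0" if "i < k" "j \<le> n i" "j \<noteq> J i" for i j
    proof -
      have "(1 - u) * bary y i j + u * bary z i j = 0" using comb[of i j] that
        by (simp add: corner_def)
      moreover have "0 \<le> bary y i j" "0 \<le> bary z i j" using y z that by (auto simp: mem_P_iff)
      ultimately show ?thesis using \<open>0 < u\<close> \<open>u < 1\<close>
        by (smt (verit, best) mult_nonneg_nonneg mult_pos_pos)
    qed
    then show "bary y = corner J" "bary z = corner J"
      using eq_corner[OF bary_in_prod_simplex J] y z by blast+
  qed
  then have "y = z" by (metis map_bary)
  with \<open>y \<noteq> z\<close> show False by simp
qed

lemma not_extreme_point_if_two_positive:
  assumes p: "p \<in> \<Delta>" and "i < k" "j1 \<le> n i" "j2 \<le> n i" "j1 \<noteq> j2" "0 < p i j1" "0 < p i j2"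
  shows "\<not> \<Phi> p extreme_point_of P"
proof
  assume extreme: "\<Phi> p extreme_point_of P"
  define e where "e = min (p i j1) (p i j2)"
  define d where
    "d = (\<lambda>i' j'. (if i' = i \<and> j' = j1 then e else 0) - (if i' = i \<and> j' = j2 then e else 0))"
  have "(\<Sum>j\<le>n i'. d i' j) = 0" for i'
    using assms by (cases "i' = i") (simp_all add: d_def sum_subtractf sum.delta')
  moreover have "d i' j' = 0" if "k \<le> i' \<or> n i' < j'" for i' j'
    using assms that by (auto simp: d_def)
  ultimately have d: "d \<in> dirs" "(\<lambda>i j. - d i j) \<in> dirs"
    by (simp_all add: dirs_def sum_negf)
  have "0 < e" using assms by (simp add: e_def)
  have "0 \<le> p i' j' + d i' j'" "0 \<le> p i' j' - d i' j'" for i' j'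
    using p assms by (auto simp: mem_prod_simplex_iff d_def e_def)
  then have q: "(\<lambda>i j. p i j + d i j) \<in> \<Delta>" "(\<lambda>i j. p i j + - d i j) \<in> \<Delta>"
    using p plane_add_dir[OF _ d(1)] plane_add_dir[OF _ d(2)]
      by (simp_all add: mem_prod_simplex_iff)
  have "p i j1 + d i j1 \<noteq> p i j1 + - d i j1" using \<open>0 < e\<close> \<open>j1 \<noteq> j2\<close> by (simp add: d_def)
  then have "(\<lambda>i j. p i j + d i j) \<noteq> (\<lambda>i j. p i j + - d i j)" by metis
  then have ne: "\<Phi> (\<lambda>i j. p i j + d i j) \<noteq> \<Phi> (\<lambda>i j. p i j + - d i j)"
    using inj q by (meson inj_onD)
  have "\<Phi> (\<lambda>i j. p i j + d i j) + \<Phi> (\<lambda>i j. p i j + - d i j) = 2 *\<^sub>R \<Phi> p"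
    by (simp add: prod_simplex_map_add prod_simplex_map_diff scaleR_2)
  then have "\<Phi> p = midpoint (\<Phi> (\<lambda>i j. p i j + d i j)) (\<Phi> (\<lambda>i j. p i j + - d i j))"
    by (simp add: midpoint_def)
  then have "\<Phi> p \<in> open_segment (\<Phi> (\<lambda>i j. p i j + d i j)) (\<Phi> (\<lambda>i j. p i j + - d i j))"
    using ne by (simp add: midpoint_in_open_segment)
  then show False using extreme q by (auto simp: extreme_point_of_def)
qed

lemma extreme_point_bary_row:
  assumes x: "x extreme_point_of P" and i: "i < k"
  shows "\<exists>j\<le>n i. \<forall>j'\<le>n i. j' \<noteq> j \<longrightarrow> bary x i j' = 0"
proof -
  have xP: "x \<in> P" using x by (simp add: extreme_point_of_def)
  obtain j1 where j1: "j1 \<le> n i" "0 < bary x i j1"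
  proof -
    have "\<not> (\<forall>j\<le>n i. bary x i j \<le> 0)"
    proof
      assume "\<forall>j\<le>n i. bary x i j \<le> 0"
      then have "(\<Sum>j\<le>n i. bary x i j) \<le> 0" by (intro sum_nonpos) auto
      then show False using bary_row_sum[OF i] by simp
    qed
    then show ?thesis using that by (auto simp: not_le)
  qed
  have "bary x i j' = 0" if "j' \<le> n i" "j' \<noteq> j1" for j'
  proof -
    have "\<not> 0 < bary x i j'"
    proof
      assume "0 < bary x i j'"
      moreover have "j1 \<noteq> j'" using that(2) by simp
      ultimately have "\<not> \<Phi> (bary x) extreme_point_of P"
        using not_extreme_point_if_two_positive[OF bary_in_prod_simplex[OF xP] i j1(1) that(1)]
          j1(2)
        by blast
      then show False using x by (simp add: map_bary)
    qed
    moreover have "0 \<le> bary x i j'" using xP i that(1) by (simp add: mem_P_iff)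
    ultimately show ?thesis by simp
  qed
  then show ?thesis using j1(1) by blast
qed

lemma extreme_point_is_vertex:
  assumes x: "x extreme_point_of P"
  shows "x \<in> vertex ` labels"
proof -
  define J where
    "J = restrict (\<lambda>i. SOME j. j \<le> n i \<and> (\<forall>j'\<le>n i. j' \<noteq> j \<longrightarrow> bary x i j' = 0)) {..<k}"
  have J: "J i \<le> n i \<and> (\<forall>j'\<le>n i. j' \<noteq> J i \<longrightarrow> bary x i j' = 0)" if "i < k" for i
    using someI_ex[OF extreme_point_bary_row[OF x that]] that by (simp add: J_def)
  then have "J \<in> labels" by (auto simp: labels_def J_def)
  have "x \<in> P" using x by (simp add: extreme_point_of_def)
  then have "bary x = corner J"
    using J by (intro eq_corner[OF bary_in_prod_simplex \<open>J \<in> labels\<close>]) auto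
  then have "x = vertex J" by (metis map_bary vertex_def)
  then show ?thesis using \<open>J \<in> labels\<close> by blast
qed

lemma vertices_eq: "vertices P = vertex ` labels"
  unfolding vertices_def using extreme_point_is_vertex extreme_point_vertex by blast

section \<open>Facets and their outward normals\<close>

definition coords :: "(nat \<times> nat) set" where
  "coords = Sigma {..<k} (\<lambda>i. {..n i})"

definition facet_coords :: "(nat \<times> nat) set" where
  "facet_coords = {F \<in> coords. 1 \<le> n (fst F)}"

definition bary_at :: "real^'d \<Rightarrow> nat \<times> nat \<Rightarrow> real" where
  "bary_at x F = bary x (fst F) (snd F)"

definition grad_at :: "nat \<times> nat \<Rightarrow> real^'d" where
  "grad_at F = grad (fst F) (snd F)"

lemma bary_at_affine: "bary_at x F = grad_at F \<bullet> x + bary_at 0 F"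
  unfolding bary_at_def grad_at_def by (rule bary_affine)

lemma bary_at_segment:
  "bary_at ((1 - u) *\<^sub>R y + u *\<^sub>R z) F = (1 - u) * bary_at y F + u * bary_at z F"
  unfolding bary_at_def by (rule bary_segment)

lemma finite_coords: "finite coords"
  unfolding coords_def by auto

lemma finite_facet_coords: "finite facet_coords"
  using finite_coords unfolding facet_coords_def by auto

lemma mem_P_iff_coords: "x \<in> P \<longleftrightarrow> (\<forall>F\<in>coords. 0 \<le> bary_at x F)"
  unfolding mem_P_iff coords_def bary_at_def by auto

lemma bary_at_trivial_factor: "F \<in> coords \<Longrightarrow> n (fst F) = 0 \<Longrightarrow> bary_at x F = 1"
  using bary_row_sum[of "fst F" x] by (auto simp: coords_def bary_at_def)

lemma mem_P_iff_facet_coords: "x \<in> P \<longleftrightarrow> (\<forall>F\<in>facet_coords. 0 \<le> bary_at x F)"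
proof -
  have "0 \<le> bary_at x F" if "F \<in> coords" "F \<notin> facet_coords" for F
    using that bary_at_trivial_factor[of F x] by (simp add: facet_coords_def)
  then show ?thesis unfolding mem_P_iff_coords facet_coords_def by blast
qed

lemma bary_at_centre_pos: "F \<in> coords \<Longrightarrow> 0 < bary_at (\<Phi> centre) F"
  using centre_pos centre_in_plane by (auto simp: coords_def bary_at_def bary_map)

lemma exists_point_violating_only:
  assumes F: "F \<in> facet_coords"
  obtains y where "bary_at y F < 0" "\<And>G. G \<in> coords \<Longrightarrow> G \<noteq> F \<Longrightarrow> 0 \<le> bary_at y G"
proof -
  obtain i j where Fij: "F = (i, j)" by (cases F)
  have i: "i < k" "j \<le> n i" "1 \<le> n i" using F Fij by (auto simp: facet_coords_def coords_def)
  define j' where "j' = (if j = 0 then 1 else (0::nat))"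
  have j': "j' \<le> n i" "j' \<noteq> j" using i by (auto simp: j'_def)
  define p :: "nat \<Rightarrow> nat \<Rightarrow> real" where
    "p = (\<lambda>i1 j1. if i1 = i then (if j1 = j' then 2 else 0) - (if j1 = j then 1 else 0)
    else (if i1 < k \<and> j1 = 0 then 1 else 0))"
  have "(\<Sum>j1\<le>n i1. p i1 j1) = 1" if "i1 < k" for i1
    using that i j' by (cases "i1 = i") (simp_all add: p_def sum_subtractf sum.delta')
  moreover have "p i1 j1 = 0" if "k \<le> i1 \<or> n i1 < j1" for i1 j1
    using that i j' by (auto simp: p_def)
  ultimately have "bary (\<Phi> p) = p" by (intro bary_map) (simp add: plane_def)
  then have "bary_at (\<Phi> p) F < 0" "\<And>G. G \<in> coords \<Longrightarrow> G \<noteq> F \<Longrightarrow> 0 \<le> bary_at (\<Phi> p) G"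
    using Fij j' by (auto simp: bary_at_def p_def coords_def)
  then show ?thesis using that by blast
qed

text \<open>On the segment from the centre to a point violating only the constraint at F there is a
  point at which only that constraint is tight.\<close>
lemma exists_point_tight_only:
  assumes F: "F \<in> facet_coords"
  obtains z where "bary_at z F = 0" "\<And>G. G \<in> coords \<Longrightarrow> G \<noteq> F \<Longrightarrow> 0 < bary_at z G"
proof -
  obtain y where y: "bary_at y F < 0" "\<And>G. G \<in> coords \<Longrightarrow> G \<noteq> F \<Longrightarrow> 0 \<le> bary_at y G"
    using exists_point_violating_only[OF F] by blast
  define c where "c = \<Phi> centre"
  have c: "0 < bary_at c G" if "G \<in> coords" for G
    using bary_at_centre_pos[OF that] by (simp add: c_def)
  have "F \<in> coords" using F by (simp add: facet_coords_def)
  define t where "t = bary_at c F / (bary_at c F - bary_at y F)"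
  have t: "0 < t" "t < 1" using c[OF \<open>F \<in> coords\<close>] y(1) by (simp_all add: t_def field_simps)
  define z where "z = (1 - t) *\<^sub>R c + t *\<^sub>R y"
  have "bary_at z F = 0"
    using c[OF \<open>F \<in> coords\<close>] y(1) unfolding z_def bary_at_segment by (simp add: t_def field_simps)
  moreover have "0 < bary_at z G" if "G \<in> coords" "G \<noteq> F" for G
    using c[OF that(1)] y(2)[OF that] t unfolding z_def bary_at_segment
    by (simp add: add_pos_nonneg)
  ultimately show ?thesis using that by blast
qed

lemma grad_at_nonzero:
  assumes F: "F \<in> facet_coords" shows "grad_at F \<noteq> 0"
proof
  assume "grad_at F = 0"
  obtain y where "bary_at y F < 0" using exists_point_violating_only[OF F] by blast
  moreover have "bary_at y F = bary_at (\<Phi> centre) F"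
    using bary_at_affine[of y F] bary_at_affine[of "\<Phi> centre" F] \<open>grad_at F = 0\<close> by simp
  moreover have "0 < bary_at (\<Phi> centre) F" using bary_at_centre_pos F
    by (simp add: facet_coords_def)
  ultimately show False by simp
qed

definition halfspace :: "nat \<times> nat \<Rightarrow> (real^'d) set" where
  "halfspace F = {x. (- grad_at F) \<bullet> x \<le> bary_at 0 F}"

lemma mem_halfspace: "x \<in> halfspace F \<longleftrightarrow> 0 \<le> bary_at x F"
  by (simp add: halfspace_def bary_at_affine[of x]) linarith

lemma P_eq_Inter_halfspaces: "P = \<Inter> (halfspace ` facet_coords)"
proof (rule set_eqI)
  fix x show "x \<in> P \<longleftrightarrow> x \<in> \<Inter> (halfspace ` facet_coords)"
    unfolding mem_P_iff_facet_coords by (simp add: mem_halfspace)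
qed

lemma inj_on_halfspace: "inj_on halfspace facet_coords"
proof (rule inj_onI)
  fix F G assume "F \<in> facet_coords" "G \<in> facet_coords" "halfspace F = halfspace G"
  obtain y where y: "bary_at y F < 0" "\<And>H. H \<in> coords \<Longrightarrow> H \<noteq> F \<Longrightarrow> 0 \<le> bary_at y H"
    using exists_point_violating_only \<open>F \<in> facet_coords\<close> by blast
  show "F = G"
  proof (rule ccontr)
    assume "F \<noteq> G"
    then have "y \<in> halfspace G" using y(2)[of G] \<open>G \<in> facet_coords\<close>
      by (simp add: mem_halfspace facet_coords_def)
    moreover have "y \<notin> halfspace F" using y(1) by (simp add: mem_halfspace)
    ultimately show False using \<open>halfspace F = halfspace G\<close> by simp
  qed
qed

lemma affine_hull_P: "affine hull P = UNIV"
  using aff_dim_eq_full[of P] aff_dim_eq by simp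

definition facet :: "nat \<times> nat \<Rightarrow> (real^'d) set" where
  "facet F = P \<inter> {x. bary_at x F = 0}"

lemma P_psubset_Inter_proper_subfamily:
  assumes H: "H \<subset> halfspace ` facet_coords"
  shows "P \<subset> \<Inter> H"
proof -
  obtain F where F: "F \<in> facet_coords" "halfspace F \<notin> H" using H by blast
  obtain y where y: "bary_at y F < 0" "\<And>G. G \<in> coords \<Longrightarrow> G \<noteq> F \<Longrightarrow> 0 \<le> bary_at y G"
    using exists_point_violating_only[OF F(1)] by blast
  have "y \<in> h" if h: "h \<in> H" for h
  proof -
    obtain G where G: "G \<in> facet_coords" "h = halfspace G" using H h by blast
    then have "G \<noteq> F" using F(2) h by blast
    then show ?thesis using G y(2) by (simp add: mem_halfspace facet_coords_def)
  qed
  moreover have "y \<notin> P"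
  proof
    assume "y \<in> P"
    then have "0 \<le> bary_at y F" using F(1) by (simp only: mem_P_iff_facet_coords)
    with y(1) show False by simp
  qed
  moreover have "P \<subseteq> \<Inter> H" using H unfolding P_eq_Inter_halfspaces by blast
  ultimately show ?thesis by blast
qed

lemma facet_of_iff: "C facet_of P \<longleftrightarrow> (\<exists>F\<in>facet_coords. C = facet F)"
proof -
  define F_of where "F_of h = inv_into facet_coords halfspace h" for h
  have F_of: "F_of (halfspace F) = F" if "F \<in> facet_coords" for F
    using that inj_on_halfspace by (simp add: F_of_def)
  have "C facet_of P \<longleftrightarrow> (\<exists>h. h \<in> halfspace ` facet_coords \<and>
      C = P \<inter> {x. (- grad_at (F_of h)) \<bullet> x = bary_at 0 (F_of h)})"
  proof (rule facet_of_polyhedron_explicit)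
    show "P = affine hull P \<inter> \<Inter> (halfspace ` facet_coords)"
      using affine_hull_P P_eq_Inter_halfspaces by simp
    show "- grad_at (F_of h) \<noteq> 0 \<and> h = {x. (- grad_at (F_of h)) \<bullet> x \<le> bary_at 0 (F_of h)}"
      if "h \<in> halfspace ` facet_coords" for h
      using that F_of grad_at_nonzero by (auto simp: halfspace_def)
    show "P \<subset> affine hull P \<inter> \<Inter> H" if "H \<subset> halfspace ` facet_coords" for H
      using P_psubset_Inter_proper_subfamily[OF that] affine_hull_P by simp
  qed (use finite_facet_coords in simp)
  also have "\<dots> \<longleftrightarrow> (\<exists>F\<in>facet_coords. C = P \<inter> {x. (- grad_at F) \<bullet> x = bary_at 0 F})"
  proof
    assume "\<exists>h. h \<in> halfspace ` facet_coords \<and>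
      C = P \<inter> {x. (- grad_at (F_of h)) \<bullet> x = bary_at 0 (F_of h)}"
    then obtain F where "F \<in> facet_coords"
      "C = P \<inter> {x. (- grad_at (F_of (halfspace F))) \<bullet> x = bary_at 0 (F_of (halfspace F))}"
      by blast
    then show "\<exists>F\<in>facet_coords. C = P \<inter> {x. (- grad_at F) \<bullet> x = bary_at 0 F}"
      using F_of by auto
  next
    assume "\<exists>F\<in>facet_coords. C = P \<inter> {x. (- grad_at F) \<bullet> x = bary_at 0 F}"
    then obtain F where "F \<in> facet_coords" "C = P \<inter> {x. (- grad_at F) \<bullet> x = bary_at 0 F}"
      by blast
    then show "\<exists>h. h \<in> halfspace ` facet_coords \<and>
        C = P \<inter> {x. (- grad_at (F_of h)) \<bullet> x = bary_at 0 (F_of h)}"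
      using F_of by (intro exI[of _ "halfspace F"]) auto
  qed
  also have "\<dots> \<longleftrightarrow> (\<exists>F\<in>facet_coords. C = facet F)"
  proof -
    have "(- grad_at F) \<bullet> x = bary_at 0 F \<longleftrightarrow> bary_at x F = 0" for x F
      using bary_at_affine[of x F] by auto
    then show ?thesis by (simp add: facet_def)
  qed
  finally show ?thesis .
qed

lemma facet_relative_interior_point:
  assumes F: "F \<in> facet_coords"
  obtains z e where "z \<in> facet F" "0 < e" "ball z e \<inter> {y. 0 \<le> bary_at y F} \<subseteq> P"
proof -
  obtain z where z: "bary_at z F = 0" "\<And>G. G \<in> coords \<Longrightarrow> G \<noteq> F \<Longrightarrow> 0 < bary_at z G"
    using exists_point_tight_only[OF F] by blast
  define U where "U = (\<Inter>G\<in>coords - {F}. {y. grad_at G \<bullet> y > - bary_at 0 G})"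
  have "open U" unfolding U_def using finite_coords
    by (intro open_INT) (auto intro: open_halfspace_gt)
  moreover have "z \<in> U"
  proof -
    have "grad_at G \<bullet> z > - bary_at 0 G" if "G \<in> coords - {F}" for G
      using z(2)[of G] that bary_at_affine[of z G] by auto
    then show ?thesis by (auto simp: U_def)
  qed
  ultimately obtain e where "e > 0" "ball z e \<subseteq> U" using open_contains_ball by blast
  have near: "ball z e \<inter> {y. 0 \<le> bary_at y F} \<subseteq> P"
  proof
    fix y assume y: "y \<in> ball z e \<inter> {y. 0 \<le> bary_at y F}"
    have "0 \<le> bary_at y G" if "G \<in> coords" for G
    proof (cases "G = F")
      case False
      then have "grad_at G \<bullet> y > - bary_at 0 G"
        using y \<open>ball z e \<subseteq> U\<close> that by (auto simp: U_def)
      then show ?thesis using bary_at_affine[of y G] by simp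
    qed (use y in simp)
    then show "y \<in> P" by (simp add: mem_P_iff_coords)
  qed
  moreover have "z \<in> facet F" using near \<open>e > 0\<close> z(1) by (auto simp: facet_def)
  ultimately show ?thesis using that \<open>e > 0\<close> by blast
qed

lemma outward_normal_facet:
  assumes F: "F \<in> facet_coords"
  shows "outward_normal P (facet F) = - (1 / norm (grad_at F)) *\<^sub>R grad_at F"
proof -
  define a where "a = - grad_at F"
  define u0 where "u0 = (1 / norm a) *\<^sub>R a"
  have "a \<noteq> 0" using grad_at_nonzero[OF F] by (simp add: a_def)
  obtain z e where z: "z \<in> facet F" and "0 < e" and near: "ball z e \<inter> {y. 0 \<le> bary_at y F} \<subseteq> P"
    using facet_relative_interior_point[OF F] by blast
  have le_iff: "a \<bullet> y \<le> a \<bullet> z \<longleftrightarrow> 0 \<le> bary_at y F" for y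
    using bary_at_affine[of y F] bary_at_affine[of z F] z by (auto simp: a_def facet_def)
  have "P \<subseteq> {y. a \<bullet> y \<le> a \<bullet> z}"
  proof
    fix y assume "y \<in> P"
    then have "0 \<le> bary_at y F" using F by (simp only: mem_P_iff_facet_coords)
    then show "y \<in> {y. a \<bullet> y \<le> a \<bullet> z}" using le_iff by simp
  qed
  then have P_sub: "P \<subseteq> {y. u0 \<bullet> y \<le> u0 \<bullet> z}"
    using \<open>a \<noteq> 0\<close> by (auto simp: u0_def divide_right_mono)
  have "a \<bullet> y = a \<bullet> z" if "y \<in> facet F" for y
    using that z bary_at_affine[of y F] bary_at_affine[of z F] by (auto simp: a_def facet_def)
  then have facet_sub: "facet F \<subseteq> {y. u0 \<bullet> y = u0 \<bullet> z}" by (auto simp: u0_def)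
  have "norm u0 = 1" using \<open>a \<noteq> 0\<close> by (simp add: u0_def)
  then have "norm u0 = 1 \<and> (\<exists>h. P \<subseteq> {y. u0 \<bullet> y \<le> h} \<and> facet F \<subseteq> {y. u0 \<bullet> y = h})"
    using P_sub facet_sub by blast
  moreover have "u = u0"
    if "norm u = 1 \<and> (\<exists>h. P \<subseteq> {y. u \<bullet> y \<le> h} \<and> facet F \<subseteq> {y. u \<bullet> y = h})" for u
  proof -
    have "ball z e \<inter> {y. a \<bullet> y \<le> a \<bullet> z} \<subseteq> P" using near le_iff by blast
    then show ?thesis using that z unfolding u0_def
      by (intro supporting_unit_normal_unique[OF \<open>a \<noteq> 0\<close> \<open>0 < e\<close>]) auto
  qed
  ultimately have "outward_normal P (facet F) = u0"
    unfolding outward_normal_def by (rule the_equality)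
  then show ?thesis by (simp add: u0_def a_def)
qed

lemma inner_outward_normal:
  assumes "F \<in> facet_coords" "v \<in> facet F"
  shows "(v - y) \<bullet> outward_normal P (facet F) = bary_at y F / norm (grad_at F)"
proof -
  have "bary_at v F = 0" using assms(2) by (simp add: facet_def)
  have "(v - y) \<bullet> outward_normal P (facet F) = (grad_at F \<bullet> y - grad_at F \<bullet> v) / norm (grad_at F)"
    unfolding outward_normal_facet[OF assms(1)]
      by (simp add: inner_diff_left inner_commute field_split_simps)
  also have "\<dots> = bary_at y F / norm (grad_at F)"
    using \<open>bary_at v F = 0\<close> bary_at_affine[of v F] bary_at_affine[of y F] by simp
  finally show ?thesis .
qed

definition incident :: "(nat \<Rightarrow> nat) \<Rightarrow> (nat \<times> nat) set" where
  "incident J = {F \<in> coords. snd F \<noteq> J (fst F)}"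

lemma finite_incident: "finite (incident J)"
  using finite_coords by (simp add: incident_def)

lemma incident_subset_facet_coords: "J \<in> labels \<Longrightarrow> incident J \<subseteq> facet_coords"
  using label_le by (fastforce simp: incident_def facet_coords_def coords_def)

lemma bary_at_vertex:
  "J \<in> labels \<Longrightarrow> F \<in> coords \<Longrightarrow> bary_at (vertex J) F = (if snd F = J (fst F) then 1 else 0)"
  by (auto simp: bary_at_def bary_vertex corner_def coords_def)

lemma vertex_in_facet_iff: "J \<in> labels \<Longrightarrow> F \<in> coords \<Longrightarrow> vertex J \<in> facet F \<longleftrightarrow> snd F \<noteq> J (fst F)"
  using bary_at_vertex vertex_in_P by (simp add: facet_def)

lemma inj_on_facet: "inj_on facet facet_coords"
proof (rule inj_onI, rule ccontr)
  fix F G assume F: "F \<in> facet_coords" and G: "G \<in> facet_coords" and "facet F = facet G" "F \<noteq> G"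
  obtain i j i' j' where Fij: "F = (i, j)" and Gij: "G = (i', j')" by (cases F, cases G)
  have i: "i < k" "j \<le> n i" "1 \<le> n i" and i': "i' < k" "j' \<le> n i'"
    using F G Fij Gij by (auto simp: facet_coords_def coords_def)
  define J where
    "J = restrict (\<lambda>l. if l = i' then j' else if l = i then (if j = 0 then 1 else 0) else 0) {..<k}"
  have J: "J \<in> labels" using i i' by (auto simp: J_def labels_def)
  have "J i \<noteq> j" using i \<open>F \<noteq> G\<close> Fij Gij by (auto simp: J_def)
  then have "vertex J \<in> facet F" using vertex_in_facet_iff[OF J] F Fij
    by (simp add: facet_coords_def)
  moreover have "vertex J \<notin> facet G"
    using vertex_in_facet_iff[OF J] G Gij i' by (simp add: facet_coords_def J_def)
  ultimately show False using \<open>facet F = facet G\<close> by simp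
qed

lemma facets_at_vertex:
  assumes J: "J \<in> labels" shows "facets_at P (vertex J) = facet ` incident J"
proof -
  have "{F \<in> facet_coords. vertex J \<in> facet F} = incident J"
    using vertex_in_facet_iff[OF J] incident_subset_facet_coords[OF J]
    by (auto simp: incident_def facet_coords_def)
  then show ?thesis unfolding facets_at_def facet_of_iff by blast
qed

section \<open>The determinant of the facet normals at a vertex\<close>

text \<open>\<Phi> (edge J G) is the edge vector from vertex J along the edge leaving the facet G;
  these vectors form the basis dual to the gradients of the facets at vertex J.\<close>
definition edge :: "(nat \<Rightarrow> nat) \<Rightarrow> nat \<times> nat \<Rightarrow> nat \<Rightarrow> nat \<Rightarrow> real" where
  "edge J G = (\<lambda>i j. (if i = fst G \<and> j = snd G then 1 else 0) -
    (if i = fst G \<and> j = J (fst G) then 1 else 0))"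

lemma edge_in_dirs:
  assumes J: "J \<in> labels" and G: "G \<in> incident J" shows "edge J G \<in> dirs"
proof -
  obtain i l where Gil: "G = (i, l)" by (cases G)
  have i: "i < k" "l \<le> n i" "l \<noteq> J i" "J i \<le> n i" using G Gil label_le[OF J]
    by (auto simp: incident_def coords_def)
  have "(\<Sum>j\<le>n i'. edge J G i' j) = 0" for i'
    using i Gil by (cases "i' = i") (simp_all add: edge_def sum_subtractf sum.delta')
  moreover have "edge J G i' j' = 0" if "k \<le> i' \<or> n i' < j'" for i' j'
    using that i Gil by (auto simp: edge_def)
  ultimately show ?thesis by (simp add: dirs_def)
qed

lemma grad_at_inner_edge:
  assumes "J \<in> labels" "F \<in> incident J" "G \<in> incident J"
  shows "grad_at F \<bullet> \<Phi> (edge J G) = (if F = G then 1 else 0)"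
  using assms grad_inner_map[OF edge_in_dirs[OF assms(1,3)]]
  by (auto simp: grad_at_def edge_def incident_def prod_eq_iff)

lemma inj_on_grad_at: assumes J: "J \<in> labels" shows "inj_on grad_at (incident J)"
proof (rule inj_onI)
  fix F G assume "F \<in> incident J" "G \<in> incident J" "grad_at F = grad_at G"
  then have "grad_at F \<bullet> \<Phi> (edge J G) = 1" using grad_at_inner_edge[OF J] by simp
  then show "F = G" using grad_at_inner_edge[OF J \<open>F \<in> incident J\<close> \<open>G \<in> incident J\<close>]
    by (simp split: if_splits)
qed

lemma independent_grad_at:
  assumes J: "J \<in> labels" shows "independent (grad_at ` incident J)"
  unfolding independent_explicit
proof (intro conjI allI impI ballI)
  show "finite (grad_at ` incident J)" using finite_incident by simp
  fix u v assume sum0: "(\<Sum>v\<in>grad_at ` incident J. u v *\<^sub>R v) = 0" and "v \<in> grad_at ` incident J"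
  then obtain G where G: "G \<in> incident J" "v = grad_at G" by blast
  have "0 = (\<Sum>F\<in>incident J. u (grad_at F) *\<^sub>R grad_at F) \<bullet> \<Phi> (edge J G)"
    using sum0 by (simp add: sum.reindex[OF inj_on_grad_at[OF J]])
  also have "\<dots> = (\<Sum>F\<in>incident J. if F = G then u (grad_at F) else 0)"
    unfolding inner_sum_left by (intro sum.cong refl) (simp add: grad_at_inner_edge[OF J _ G(1)])
  also have "\<dots> = u (grad_at G)" using G(1) finite_incident by (simp add: sum.delta')
  finally show "u v = 0" using G by simp
qed

lemma eq_0_if_orthogonal_grad_at:
  assumes J: "J \<in> labels" and orth: "\<And>F. F \<in> incident J \<Longrightarrow> grad_at F \<bullet> x = 0"
  shows "x = 0"
proof -
  have off: "dir_coord x i j = 0" if "(i, j) \<in> incident J" for i j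
    using orth[OF that] by (simp add: dir_coord_eq_inner grad_at_def)
  have "dir_coord x i j = 0" for i j
  proof (cases "i < k \<and> j \<le> n i")
    case True
    show ?thesis
    proof (cases "j = J i")
      case True
      have "0 = (\<Sum>j\<le>n i. dir_coord x i j)" using dir_coord(1)[of x] \<open>i < k \<and> j \<le> n i\<close>
        by (simp add: dirs_def)
      also have "\<dots> = dir_coord x i (J i) + (\<Sum>j\<in>{..n i} - {J i}. dir_coord x i j)"
        using label_le[OF J, of i] \<open>i < k \<and> j \<le> n i\<close> by (simp add: sum.remove)
      also have "(\<Sum>j\<in>{..n i} - {J i}. dir_coord x i j) = 0"
        using \<open>i < k \<and> j \<le> n i\<close>
          by (intro sum.neutral ballI off) (auto simp: incident_def coords_def)
      finally show ?thesis using True by simp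
    next
      case False
      then show ?thesis using True by (intro off) (simp add: incident_def coords_def)
    qed
  next
    case False
    then show ?thesis using dir_coord(1)[of x] by (auto simp: dirs_def)
  qed
  then have "dir_coord x = (\<lambda>i j. 0)" by blast
  then show ?thesis using dir_coord(2)[of x] prod_simplex_map_zero by metis
qed

lemma card_incident: assumes J: "J \<in> labels" shows "card (incident J) = CARD('d)"
proof -
  have card_eq: "card (grad_at ` incident J) = card (incident J)"
    by (rule card_image[OF inj_on_grad_at[OF J]])
  have "card (incident J) \<le> CARD('d)"
    using independent_bound[OF independent_grad_at[OF J]] card_eq by simp
  moreover have "\<not> card (incident J) < CARD('d)"
  proof
    assume "card (incident J) < CARD('d)"
    moreover have "dim (grad_at ` incident J) \<le> card (grad_at ` incident J)"
      using finite_incident by (intro dim_le_card) (auto intro: span_base)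
    ultimately have "dim (grad_at ` incident J) < DIM(real^'d)" using card_eq by simp
    then obtain x :: "real^'d" where "x \<noteq> 0" "span (grad_at ` incident J) \<subseteq> {y. x \<bullet> y = 0}"
      using lowdim_subset_hyperplane by blast
    then have "grad_at F \<bullet> x = 0" if "F \<in> incident J" for F
      using span_base[of "grad_at F" "grad_at ` incident J"] that by (auto simp: inner_commute)
    then show False using eq_0_if_orthogonal_grad_at[OF J] \<open>x \<noteq> 0\<close> by blast
  qed
  ultimately show ?thesis by simp
qed

lemma ex_bij_incident: "J \<in> labels \<Longrightarrow> \<exists>h. bij_betw h (UNIV::'d set) (incident J)"
  using bij_betw_iff_card[of "UNIV::'d set" "incident J"] card_incident finite_incident by simp

definition grad_matrix :: "('d \<Rightarrow> nat \<times> nat) \<Rightarrow> real^'d^'d" where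
  "grad_matrix h = (\<chi> r. grad_at (h r))"

definition grad_det :: "(nat \<Rightarrow> nat) \<Rightarrow> real" where
  "grad_det J = \<bar>det (grad_matrix (SOME h. bij_betw h (UNIV::'d set) (incident J)))\<bar>"

lemma grad_det_eq:
  assumes "J \<in> labels" "bij_betw h (UNIV::'d set) (incident J)"
  shows "\<bar>det (grad_matrix h)\<bar> = grad_det J"
  unfolding grad_det_def grad_matrix_def
  using abs_det_rows_bij_eq[OF assms(2) someI_ex[OF ex_bij_incident[OF assms(1)]]] .

lemma grad_det_pos: assumes J: "J \<in> labels" shows "0 < grad_det J"
proof -
  obtain h where h: "bij_betw h (UNIV::'d set) (incident J)" using ex_bij_incident[OF J] by blast
  define C :: "real^'d^'d" where "C = (\<chi> t s. \<Phi> (edge J (h s)) $ t)"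
  have "h r \<in> incident J" for r using h by (auto simp: bij_betw_def)
  moreover have "inj h" using h by (simp add: bij_betw_def)
  ultimately have "grad_matrix h ** C = mat 1"
    using grad_at_inner_edge[OF J]
    by (simp add: vec_eq_iff mat_def matrix_matrix_mult_def grad_matrix_def C_def inner_vec_def
        inj_eq)
  then have "det (grad_matrix h) \<noteq> 0" using det_mul[of "grad_matrix h" C] by auto
  then show ?thesis using grad_det_eq[OF J h] by simp
qed

lemma grad_eq_neg_sum_others:
  assumes "1 \<le> m" "m \<le> n i"
  shows "grad i m = - grad i 0 - (\<Sum>j\<in>{..n i} - {0, m}. grad i j)"
proof -
  have "(\<Sum>j\<le>n i. grad i j) = grad i 0 + (grad i m + (\<Sum>j\<in>{..n i} - {0, m}. grad i j))"
    using assms by (simp add: sum.remove[of "{..n i}" 0] sum.remove[of "{..n i} - {0}" m]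
        Diff_insert2[symmetric] insert_commute)
  then show ?thesis using grad_row_sum[of i] by (simp add: algebra_simps eq_neg_iff_add_eq_0)
qed

text \<open>Moving vertex J to J(i := 0) trades the facet (i, 0) for the facet (i, J i), i.e. one row
  of the gradient matrix for minus itself plus a combination of the other rows.\<close>
lemma grad_det_reset:
  assumes J: "J \<in> labels" and i: "i < k"
  shows "grad_det (J(i := 0)) = grad_det J"
proof (cases "J i = 0")
  case False
  define m where "m = J i"
  have m: "1 \<le> m" "m \<le> n i" using False label_le[OF J i] by (auto simp: m_def)
  have J': "J(i := 0) \<in> labels" using J i by (rule label_upd) simp
  obtain h where h: "bij_betw h (UNIV::'d set) (incident J)" using ex_bij_incident[OF J] by blast
  have "(i, 0) \<in> incident J" using i False by (simp add: incident_def coords_def)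
  then obtain r0 where r0: "h r0 = (i, 0)" using h by (metis bij_betw_def imageE)
  define h' where "h' = h(r0 := (i, m))"
  have "incident (J(i := 0)) = insert (i, m) (incident J - {(i, 0)})"
    using i m by (auto simp: incident_def coords_def m_def)
  then have h': "bij_betw h' (UNIV::'d set) (incident (J(i := 0)))"
    unfolding h'_def using bij_betw_fun_upd_replace[OF h, of r0 "(i, m)"] r0
    by (simp add: incident_def m_def)
  define A where "A = grad_matrix h"
  define x where "x = - (\<Sum>j\<in>{..n i} - {0, m}. grad i j)"
  have "grad i j \<in> {row r A |r. r \<noteq> r0}" if "j \<in> {..n i} - {0, m}" for j
  proof -
    have "(i, j) \<in> incident J" using that i by (auto simp: incident_def coords_def m_def)
    then obtain r where "h r = (i, j)" using h by (metis bij_betw_def imageE)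
    moreover have "r \<noteq> r0" using r0 that \<open>h r = (i, j)\<close> by auto
    moreover have "row r A = grad i j"
      using \<open>h r = (i, j)\<close> by (simp add: A_def grad_matrix_def row_def grad_at_def)
    ultimately show ?thesis by (metis (mono_tags, lifting) mem_Collect_eq)
  qed
  then have x: "x \<in> span {row r A |r. r \<noteq> r0}" unfolding x_def
    by (intro span_neg span_sum span_base) auto
  have "(\<chi> r. if r = r0 then x - row r0 A else row r A) = grad_matrix h'"
    using r0 grad_eq_neg_sum_others[OF m]
    by (auto simp: A_def x_def grad_matrix_def h'_def row_def grad_at_def vec_eq_iff)
  then have "grad_det (J(i := 0)) = \<bar>det (\<chi> r. if r = r0 then x - row r0 A else row r A)\<bar>"
    using grad_det_eq[OF J' h'] by simp
  also have "\<dots> = \<bar>det A\<bar>" by (rule abs_det_negate_row_add_span[OF x])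
  also have "\<dots> = grad_det J" using grad_det_eq[OF J h] by (simp add: A_def)
  finally show ?thesis .
qed (simp add: fun_upd_idem)

definition base_label :: "nat \<Rightarrow> nat" where
  "base_label = restrict (\<lambda>_. 0) {..<k}"

lemma base_label_in_labels: "base_label \<in> labels"
  by (simp add: base_label_def labels_def)

lemma grad_det_const: assumes "J \<in> labels" shows "grad_det J = grad_det base_label"
proof -
  have "grad_det J = grad_det base_label" if "J \<in> labels" "\<forall>i. m \<le> i \<and> i < k \<longrightarrow> J i = 0" for m J
    using that
  proof (induction m arbitrary: J)
    case 0
    then have "J = base_label" unfolding labels_def
      by (intro PiE_ext[OF _ base_label_in_labels[unfolded labels_def]]) (auto simp: base_label_def)
    then show ?case by simp
  next
    case (Suc m)
    show ?case
    proof (cases "m < k")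
      case True
      have J': "J(m := 0) \<in> labels" using Suc.prems(1) True by (rule label_upd) simp
      have "grad_det (J(m := 0)) = grad_det base_label"
        using Suc.prems(2) by (intro Suc.IH[OF J']) auto
      then show ?thesis using grad_det_reset[OF Suc.prems(1) True] by simp
    next
      case False
      then show ?thesis using Suc.IH[OF Suc.prems(1)] Suc.prems(2) by auto
    qed
  qed
  from this[of J k] show ?thesis using assms by simp
qed

lemma normal_det_vertex:
  assumes J: "J \<in> labels"
  shows "normal_det P (vertex J) = grad_det base_label / (\<Prod>F\<in>incident J. norm (grad_at F))"
proof -
  have inj: "inj_on facet (incident J)"
    using inj_on_facet incident_subset_facet_coords[OF J] inj_on_subset by blast
  then have bij: "bij_betw facet (incident J) (facets_at P (vertex J))"
    by (simp add: bij_betw_def facets_at_vertex[OF J])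
  obtain h where "bij_betw h (UNIV::'d set) (incident J)" using ex_bij_incident[OF J] by blast
  then have "bij_betw (facet \<circ> h) (UNIV::'d set) (facets_at P (vertex J))"
    using bij by (rule bij_betw_trans)
  then have "\<exists>g. bij_betw g (UNIV::'d set) (facets_at P (vertex J))" by blast
  then have g: "bij_betw (SOME g. bij_betw g (UNIV::'d set) (facets_at P (vertex J))) UNIV
      (facets_at P (vertex J))" (is "bij_betw ?g _ _") by (rule someI_ex)
  define h' where "h' r = inv_into (incident J) facet (?g r)" for r
  have h': "bij_betw h' (UNIV::'d set) (incident J)"
    unfolding h'_def using bij_betw_trans[OF g bij_betw_inv_into[OF bij]] by (simp add: comp_def)
  have g_eq: "?g r = facet (h' r)" for r
  proof -
    have "?g r \<in> facet ` incident J" using bij_betw_apply[OF g UNIV_I] facets_at_vertex[OF J]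
      by simp
    then show ?thesis unfolding h'_def by (simp add: f_inv_into_f)
  qed
  have h'_in: "h' r \<in> facet_coords" for r
    using h' incident_subset_facet_coords[OF J] by (auto simp: bij_betw_def)
  have "normal_det P (vertex J) = \<bar>det (\<chi> r. (- (1 / norm (grad_at (h' r)))) *s grad_at (h' r))\<bar>"
    unfolding normal_det_def Let_def g_eq
    using outward_normal_facet[OF h'_in] by (simp add: scalar_mult_eq_scaleR)
  also have "\<dots> = (\<Prod>r\<in>UNIV. 1 / norm (grad_at (h' r))) * \<bar>det (grad_matrix h')\<bar>"
    unfolding grad_matrix_def det_rows_mul by (simp add: abs_mult abs_prod)
  also have "\<dots> = (\<Prod>F\<in>incident J. 1 / norm (grad_at F)) * grad_det base_label"
    using prod.reindex_bij_betw[OF h', of "\<lambda>F. 1 / norm (grad_at F)"] grad_det_eq[OF J h']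
      grad_det_const[OF J] by simp
  finally show ?thesis by (simp add: prod_dividef)
qed

section \<open>Wachspress coordinates\<close>

definition pcoord :: "(nat \<Rightarrow> nat) \<Rightarrow> real^'d \<Rightarrow> real" where
  "pcoord J y = (\<Prod>i<k. bary y i (J i))"

lemma wachspress_weight_vertex:
  assumes J: "J \<in> labels"
  shows "wachspress_weight P (vertex J) y =
    fact CARD('d) * grad_det base_label / (\<Prod>F\<in>incident J. bary_at y F)"
proof -
  have inj: "inj_on facet (incident J)"
    using inj_on_facet incident_subset_facet_coords[OF J] inj_on_subset by blast
  have "(\<Prod>C\<in>facets_at P (vertex J). (vertex J - y) \<bullet> outward_normal P C)
      = (\<Prod>F\<in>incident J. (vertex J - y) \<bullet> outward_normal P (facet F))"
    unfolding facets_at_vertex[OF J] by (rule prod.reindex[OF inj, unfolded comp_def])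
  also have "\<dots> = (\<Prod>F\<in>incident J. bary_at y F / norm (grad_at F))"
    using inner_outward_normal vertex_in_facet_iff[OF J] incident_subset_facet_coords[OF J]
    by (intro prod.cong) (auto simp: incident_def)
  also have "\<dots> = (\<Prod>F\<in>incident J. bary_at y F) / (\<Prod>F\<in>incident J. norm (grad_at F))"
    by (simp add: prod_dividef)
  finally show ?thesis
    using grad_at_nonzero incident_subset_facet_coords[OF J] finite_incident
    by (auto simp: wachspress_weight_def normal_det_vertex[OF J] prod_zero_iff)
qed

lemma prod_coords_split:
  assumes J: "J \<in> labels"
  shows "(\<Prod>F\<in>coords. bary_at y F) = (\<Prod>F\<in>incident J. bary_at y F) * pcoord J y"
proof -
  define D where "D = (\<lambda>i. (i, J i)) ` {..<k}"
  have "coords = incident J \<union> D" "incident J \<inter> D = {}"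
    using label_le[OF J] by (auto simp: coords_def incident_def D_def)
  moreover have "(\<Prod>F\<in>D. bary_at y F) = pcoord J y"
    unfolding D_def pcoord_def by (subst prod.reindex) (auto simp: inj_on_def bary_at_def)
  ultimately show ?thesis using finite_incident by (simp add: prod.union_disjoint D_def)
qed

lemma sum_pcoord: "(\<Sum>J\<in>labels. pcoord J y) = 1"
proof -
  have "(\<Sum>J\<in>labels. pcoord J y) = (\<Prod>i<k. \<Sum>j\<le>n i. bary y i j)"
    unfolding labels_def pcoord_def by (rule prod_sum_PiE[symmetric]) auto
  then show ?thesis by (simp add: bary_row_sum)
qed

lemma wachspress_interior_vertex:
  assumes J: "J \<in> labels" and pos: "\<And>F. F \<in> coords \<Longrightarrow> 0 < bary_at y F"
  shows "wachspress_interior P y (vertex J) = pcoord J y"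
proof -
  define PF where "PF = (\<Prod>F\<in>coords. bary_at y F)"
  define K where "K = fact CARD('d) * grad_det base_label"
  have "0 < PF" unfolding PF_def using pos by (intro prod_pos) auto
  have "0 < K" unfolding K_def using grad_det_pos[OF base_label_in_labels] by simp
  have pcoord_pos: "0 < pcoord J' y" if "J' \<in> labels" for J'
    unfolding pcoord_def using pos label_le[OF that]
      by (intro prod_pos) (auto simp: coords_def bary_at_def)
  have weight: "wachspress_weight P (vertex J') y = K / PF * pcoord J' y" if "J' \<in> labels" for J'
    using prod_coords_split[OF that, of y] pcoord_pos[OF that]
    by (simp add: wachspress_weight_vertex[OF that] K_def PF_def)
  have "(\<Sum>v\<in>vertices P. wachspress_weight P v y) = (\<Sum>J'\<in>labels. wachspress_weight P (vertex J') y)"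
    unfolding vertices_eq by (rule sum.reindex[OF inj_on_vertex, unfolded comp_def])
  also have "\<dots> = (\<Sum>J'\<in>labels. K / PF * pcoord J' y)" using weight by (intro sum.cong) auto
  also have "\<dots> = K / PF" by (simp only: sum_distrib_left[symmetric] sum_pcoord mult_1_right)
  finally show ?thesis using \<open>0 < K\<close> \<open>0 < PF\<close> by (simp add: wachspress_interior_def weight[OF J])
qed

lemma bary_at_pos_interior:
  assumes y: "y \<in> interior P" and F: "F \<in> coords" shows "0 < bary_at y F"
proof (cases "F \<in> facet_coords")
  case True
  have "y \<in> interior (halfspace F)"
    using y interior_mono[of P "halfspace F"] True P_eq_Inter_halfspaces by blast
  moreover have "interior (halfspace F) = {x. (- grad_at F) \<bullet> x < bary_at 0 F}"
    unfolding halfspace_def using grad_at_nonzero[OF True] by (intro interior_halfspace_le) simp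
  ultimately show ?thesis using bary_at_affine[of y F] by simp
next
  case False
  then show ?thesis using F bary_at_trivial_factor by (simp add: facet_coords_def)
qed

lemma convex_P: "convex P"
  unfolding P_eq_Inter_halfspaces
    by (intro convex_INT ballI) (simp only: halfspace_def convex_halfspace_le)

lemma closed_P: "closed P"
  unfolding P_eq_Inter_halfspaces
    by (intro closed_INT ballI) (simp only: halfspace_def closed_halfspace_le)

lemma closure_interior_P: "closure (interior P) = P"
proof -
  have "P \<noteq> {}" using centre_in_prod_simplex by blast
  then have "interior P \<noteq> {}"
    using rel_interior_eq_empty[OF convex_P] rel_interior_interior[OF affine_hull_P] by simp
  then show ?thesis using convex_closure_interior[OF convex_P] closed_P closure_closed by metis
qed

lemma tendsto_pcoord: "((\<lambda>y. pcoord J y) \<longlongrightarrow> pcoord J x) (at x within S)"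
proof -
  have "((\<lambda>y. grad i j \<bullet> y + bary 0 i j) \<longlongrightarrow> grad i j \<bullet> x + bary 0 i j) (at x within S)" for i j
    by (intro tendsto_intros)
  then have "((\<lambda>y. bary y i j) \<longlongrightarrow> bary x i j) (at x within S)" for i j
    by (simp only: bary_affine[symmetric])
  then show ?thesis unfolding pcoord_def by (intro tendsto_prod)
qed

lemma wachspress_vertex:
  assumes J: "J \<in> labels" and x: "x \<in> P"
  shows "wachspress P x (vertex J) = pcoord J x"
proof -
  have int: "wachspress_interior P y (vertex J) = pcoord J y" if "y \<in> interior P" for y
    using wachspress_interior_vertex[OF J bary_at_pos_interior[OF that]] .
  show ?thesis
  proof (cases "x \<in> interior P")
    case False
    have "\<forall>\<^sub>F y in at x within interior P. pcoord J y = wachspress_interior P y (vertex J)"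
      unfolding eventually_at_filter by (intro always_eventually) (simp add: int)
    then have lim:
        "((\<lambda>y. wachspress_interior P y (vertex J)) \<longlongrightarrow> pcoord J x) (at x within interior P)"
      by (rule tendsto_cong[THEN iffD1, OF _ tendsto_pcoord])
    have "x islimpt interior P"
      using x False closure_interior_P unfolding closure_def by blast
    then have "\<not> trivial_limit (at x within interior P)" by (simp add: trivial_limit_within)
    then show ?thesis using False tendsto_Lim[OF _ lim] by (simp add: wachspress_def)
  qed (simp add: wachspress_def int)
qed

section \<open>Gibbs coordinates\<close>

lemma pcoord_nonneg: assumes "x \<in> P" shows "0 \<le> pcoord J x"
  using bary_in_prod_simplex[OF assms] unfolding pcoord_def mem_prod_simplex_iff
  by (intro prod_nonneg) blast

lemma labels_with_coord:
  assumes "i < k" "j \<le> n i"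
  shows "{J \<in> labels. J i = j} = PiE {..<k} (\<lambda>l. if l = i then {j} else {..n l})"
  using assms by (auto simp: labels_def PiE_def Pi_def split: if_splits)

lemma marginal_pcoord:
  assumes "i < k" "j \<le> n i"
  shows "(\<Sum>J\<in>{J \<in> labels. J i = j}. pcoord J x) = bary x i j"
proof -
  have "(\<Sum>J\<in>{J \<in> labels. J i = j}. pcoord J x) =
      (\<Prod>l<k. \<Sum>j'\<in>(if l = i then {j} else {..n l}). bary x l j')"
    unfolding labels_with_coord[OF assms] pcoord_def by (rule prod_sum_PiE[symmetric]) auto
  also have "\<dots> = (\<Prod>l<k. if l = i then bary x i j else 1)"
    using bary_row_sum by (intro prod.cong) auto
  also have "\<dots> = bary x i j" using assms(1) by simp
  finally show ?thesis .
qed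

lemma bary_barycenter:
  assumes "sum Q labels = 1" "i < k"
  shows "bary (\<Sum>J\<in>labels. Q J *\<^sub>R vertex J) i j = (\<Sum>J\<in>{J \<in> labels. J i = j}. Q J)"
proof -
  have "bary (\<Sum>J\<in>labels. Q J *\<^sub>R vertex J) i j = (\<Sum>J\<in>labels. Q J * bary (vertex J) i j)"
    by (rule bary_convex_comb[OF assms(1)])
  also have "\<dots> = (\<Sum>J\<in>labels. if J i = j then Q J else 0)"
    using assms(2) by (intro sum.cong) (auto simp: bary_vertex corner_def)
  finally show ?thesis using finite_labels by (simp add: sum.inter_filter)
qed

lemma barycenter_pcoord: "(\<Sum>J\<in>labels. pcoord J x *\<^sub>R vertex J) = x"
proof -
  have "bary (\<Sum>J\<in>labels. pcoord J x *\<^sub>R vertex J) i j = bary x i j" for i j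
  proof (cases "i < k \<and> j \<le> n i")
    case True
    then show ?thesis using bary_barycenter[OF sum_pcoord] marginal_pcoord by simp
  next
    case False
    then show ?thesis using bary_outside by auto
  qed
  then have "bary (\<Sum>J\<in>labels. pcoord J x *\<^sub>R vertex J) = bary x" by (intro ext)
  then show ?thesis by (metis map_bary)
qed

lemma weight_le_bary:
  assumes Q0: "\<And>J. J \<in> labels \<Longrightarrow> 0 \<le> Q J"
    and marg: "\<And>i j. i < k \<Longrightarrow> (\<Sum>J\<in>{J \<in> labels. J i = j}. Q J) = bary x i j"
    and "J \<in> labels" "i < k"
  shows "Q J \<le> bary x i (J i)"
  using member_le_sum[of J "{J' \<in> labels. J' i = J i}" Q] Q0 assms(3) finite_labels
    marg[OF assms(4)]
  by auto

lemma cross_entropy_pcoord: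
  assumes Q0: "\<And>J. J \<in> labels \<Longrightarrow> 0 \<le> Q J"
    and marg: "\<And>i j. i < k \<Longrightarrow> (\<Sum>J\<in>{J \<in> labels. J i = j}. Q J) = bary x i j"
  shows "(\<Sum>J\<in>labels. Q J * ln (pcoord J x)) = (\<Sum>i<k. \<Sum>j\<le>n i. bary x i j * ln (bary x i j))"
proof -
  have "Q J * ln (pcoord J x) = (\<Sum>i<k. Q J * ln (bary x i (J i)))" if J: "J \<in> labels" for J
  proof (cases "Q J = 0")
    case False
    then have "0 < bary x i (J i)" if "i < k" for i
      using weight_le_bary[OF Q0 marg J that] Q0[OF J] by linarith
    then have "ln (pcoord J x) = (\<Sum>i<k. ln (bary x i (J i)))"
      unfolding pcoord_def by (intro ln_prod) force+
    then show ?thesis by (simp add: sum_distrib_left)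
  qed simp
  then have "(\<Sum>J\<in>labels. Q J * ln (pcoord J x)) = (\<Sum>i<k. \<Sum>J\<in>labels. Q J * ln (bary x i (J i)))"
    using sum.swap[of _ "{..<k}" labels] by (simp cong: sum.cong)
  also have "\<dots> = (\<Sum>i<k. \<Sum>j\<le>n i. \<Sum>J\<in>{J \<in> labels. J i = j}. Q J * ln (bary x i j))"
  proof (intro sum.cong refl)
    fix i assume "i \<in> {..<k}"
    then have "(\<lambda>J. J i) ` labels \<subseteq> {..n i}" using label_le by auto
    then have "(\<Sum>J\<in>labels. Q J * ln (bary x i (J i))) =
        (\<Sum>j\<le>n i. \<Sum>J\<in>{J \<in> labels. J i = j}. Q J * ln (bary x i (J i)))"
      by (rule sum.group[OF finite_labels finite_atMost, symmetric])
    also have "\<dots> = (\<Sum>j\<le>n i. \<Sum>J\<in>{J \<in> labels. J i = j}. Q J * ln (bary x i j))"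
      by (intro sum.cong refl) auto
    finally show "(\<Sum>J\<in>labels. Q J * ln (bary x i (J i))) =
        (\<Sum>j\<le>n i. \<Sum>J\<in>{J \<in> labels. J i = j}. Q J * ln (bary x i j))" .
  qed
  also have "\<dots> = (\<Sum>i<k. \<Sum>j\<le>n i. bary x i j * ln (bary x i j))"
    by (simp add: sum_distrib_right[symmetric] marg)
  finally show ?thesis .
qed

lemma neg_entropy_pcoord_le:
  assumes x: "x \<in> P" and Q0: "\<And>J. J \<in> labels \<Longrightarrow> 0 \<le> Q J" and Q1: "sum Q labels = 1"
    and bc: "(\<Sum>J\<in>labels. Q J *\<^sub>R vertex J) = x"
  shows "(\<Sum>J\<in>labels. pcoord J x * ln (pcoord J x)) \<le> (\<Sum>J\<in>labels. Q J * ln (Q J))"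
    and "(\<Sum>J\<in>labels. Q J * ln (Q J)) = (\<Sum>J\<in>labels. pcoord J x * ln (pcoord J x)) \<Longrightarrow>
      \<forall>J\<in>labels. Q J = pcoord J x"
proof -
  have margQ: "(\<Sum>J\<in>{J \<in> labels. J i = j}. Q J) = bary x i j" if "i < k" for i j
    using bary_barycenter[OF Q1 that] bc by simp
  have "(\<Sum>J\<in>{J \<in> labels. J i = j}. pcoord J x) = bary x i j" if "i < k" for i j
  proof (cases "j \<le> n i")
    case False
    then have "{J \<in> labels. J i = j} = {}" using label_le[OF _ that] by fastforce
    then have "(\<Sum>J\<in>{J \<in> labels. J i = j}. pcoord J x) = 0" by (simp only: sum.empty)
    then show ?thesis using False bary_outside by simp
  qed (use marginal_pcoord that in simp)
  then have cross_eq: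
      "(\<Sum>J\<in>labels. Q J * ln (pcoord J x)) = (\<Sum>J\<in>labels. pcoord J x * ln (pcoord J x))"
    using cross_entropy_pcoord[OF Q0 margQ] cross_entropy_pcoord[OF pcoord_nonneg[OF x]] by simp
  have pos: "0 < pcoord J x" if "J \<in> labels" "0 < Q J" for J
    unfolding pcoord_def using weight_le_bary[OF Q0 margQ that(1)] that(2)
    by (intro prod_pos) (meson lessThan_iff order_less_le_trans)
  note gibbs = gibbs_inequality[OF finite_labels Q0 pcoord_nonneg[OF x] Q1 sum_pcoord pos]
  show "(\<Sum>J\<in>labels. pcoord J x * ln (pcoord J x)) \<le> (\<Sum>J\<in>labels. Q J * ln (Q J))"
    using gibbs(1) cross_eq by simp
  show "\<forall>J\<in>labels. Q J = pcoord J x"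
    if "(\<Sum>J\<in>labels. Q J * ln (Q J)) = (\<Sum>J\<in>labels. pcoord J x * ln (pcoord J x))"
    using gibbs(2) cross_eq that by simp
qed

lemma sum_vertices: "(\<Sum>v\<in>vertex ` labels. g v) = (\<Sum>J\<in>labels. g (vertex J))"
  by (rule sum.reindex[OF inj_on_vertex, unfolded comp_def])

lemma mem_barycentric_dists_vertices:
  "q \<in> barycentric_dists (vertex ` labels) x \<longleftrightarrow> (\<forall>v. v \<notin> vertex ` labels \<longrightarrow> q v = 0) \<and>
    (\<forall>J\<in>labels. 0 \<le> q (vertex J)) \<and> (\<Sum>J\<in>labels. q (vertex J)) = 1 \<and>
    (\<Sum>J\<in>labels. q (vertex J) *\<^sub>R vertex J) = x"
  unfolding barycentric_dists_def sum_vertices by blast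

lemma entropy_vertices:
  "entropy (vertex ` labels) q = - (\<Sum>J\<in>labels. q (vertex J) * ln (q (vertex J)))"
  unfolding entropy_eq sum_vertices ..

lemma gibbs_vertex:
  assumes x: "x \<in> P" and J: "J \<in> labels"
  shows "gibbs (vertices P) x (vertex J) = pcoord J x"
proof -
  define r where
    "r v = (if v \<in> vertex ` labels then pcoord (inv_into labels vertex v) x else 0)" for v
  have r_vertex: "r (vertex J') = pcoord J' x" if "J' \<in> labels" for J'
    using that inj_on_vertex by (simp add: r_def)
  have r_sum: "(\<Sum>J\<in>labels. f (r (vertex J)) J) = (\<Sum>J\<in>labels. f (pcoord J x) J)"
    for f :: "real \<Rightarrow> (nat \<Rightarrow> nat) \<Rightarrow> 'b::comm_monoid_add"
    by (rule sum.cong) (simp_all add: r_vertex)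
  have "gibbs (vertex ` labels) x = r"
  proof (rule gibbs_eqI)
    show "r \<in> barycentric_dists (vertex ` labels) x"
      unfolding mem_barycentric_dists_vertices
      using r_sum[of "\<lambda>t J. t"] r_sum[of "\<lambda>t J. t *\<^sub>R vertex J"] sum_pcoord barycenter_pcoord
        r_vertex pcoord_nonneg[OF x]
      by (simp add: r_def)
  next
    fix q assume "q \<in> barycentric_dists (vertex ` labels) x"
    then have q: "\<forall>v. v \<notin> vertex ` labels \<longrightarrow> q v = 0" "\<And>J. J \<in> labels \<Longrightarrow> 0 \<le> q (vertex J)"
        "(\<Sum>J\<in>labels. q (vertex J)) = 1" "(\<Sum>J\<in>labels. q (vertex J) *\<^sub>R vertex J) = x"
      unfolding mem_barycentric_dists_vertices by blast+
    note neg_entropy = neg_entropy_pcoord_le[OF x q(2-4)]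
    have entropy_r: "entropy (vertex ` labels) r = - (\<Sum>J\<in>labels. pcoord J x * ln (pcoord J x))"
      unfolding entropy_vertices using r_sum[of "\<lambda>t J. t * ln t"] by simp
    show "entropy (vertex ` labels) q \<le> entropy (vertex ` labels) r"
      using neg_entropy(1) unfolding entropy_r entropy_vertices[of q] by linarith
    assume "entropy (vertex ` labels) q = entropy (vertex ` labels) r"
    then have "(\<Sum>J\<in>labels. q (vertex J) * ln (q (vertex J))) =
        (\<Sum>J\<in>labels. pcoord J x * ln (pcoord J x))"
      unfolding entropy_r entropy_vertices[of q] by linarith
    then have eq: "\<forall>J\<in>labels. q (vertex J) = pcoord J x" using neg_entropy(2) by blast
    show "q = r"
    proof
      fix v show "q v = r v"
      proof (cases "v \<in> vertex ` labels")
        case True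
        then show ?thesis using eq r_vertex by auto
      next
        case False
        then show ?thesis using q(1) by (simp add: r_def)
      qed
    qed
  qed
  then show ?thesis using r_vertex[OF J] vertices_eq by simp
qed

lemma wachspress_eq_gibbs:
  assumes "x \<in> P" "v \<in> vertices P"
  shows "wachspress P x v = gibbs (vertices P) x v"
  using assms wachspress_vertex gibbs_vertex vertices_eq by auto

end

theorem theorem5p5:
  fixes P :: "(real^'n) set" and x v :: "real^'n"
  assumes "polytope P"
    and "aff_dim P = int CARD('n)"
    and "semisimplex P"
    and "x \<in> P"
    and "v \<in> vertices P"
  shows "wachspress P x v = gibbs (vertices P) x v"
proof -
  obtain k n and b :: "nat \<Rightarrow> nat \<Rightarrow> real^'n"
    where inj: "inj_on (prod_simplex_map k n b) (prod_simplex k n)"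
      and P: "prod_simplex_map k n b ` prod_simplex k n = P"
    using assms(3) unfolding semisimplex_def by blast
  have "full_dim_semisimplex k n b"
    using inj assms(2) P by unfold_locales simp_all
  from full_dim_semisimplex.wachspress_eq_gibbs[OF this] show ?thesis
    using assms(4,5) P by blast
qed

end
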